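(* Let $f=(f_m)_{m\ge1}$ be a sequence of (sufficiently smooth and decaying) functions on $\mathbb{R}^n$. Then the BME operator $Q(f)$ (defined in weak form in the context) is given, for every $m\ge1$ and $v\in\mathbb{R}^n$, by $$Q_m(f)(v)=\sum_{\substack{m',m'_1\ge1\\ m'+m'_1\ge m+1}} A_{m',m'_1;m}\int_{\{(v_1,\Omega)\in\mathbb{R}^n\times\mathbb{S}^{n-1}:\,(v-v_1)\cdot\Omega\le0\}} B_{m,m_1}(v,v_1,\Omega)\, f_{m'}(v')\,f_{m'_1}(v'_1)\Big(\frac{m\,m_1}{m'm'_1}\Big)^{n/2}dv_1\,d\Omega$$ $$\qquad-\sum_{m_1=1}^\infty\sum_{m'=1}^{m+m_1-1}A_{m,m_1;m'}\int_{\{(v_1,\Omega)\in\mathbb{R}^n\times\mathbb{S}^{n-1}:\,(v-v_1)\cdot\Omega\le0\}} B_{m,m_1}(v,v_1,\Omega)\,f_m(v)\,f_{m_1}(v_1)\,dv_1\,d\Omega,$$ where in the first (gain) sum $m_1:=m'+m'_1-m\ (\ge1)$ and $(v',v'_1)$ are the post-collisional velocities obtained from $(m,v),(m_1,v_1),\Omega$ with outgoing masses $m',m'_1$ by the collision rule below. Consequently the equation $\frac{d}{dt}\sum_m\int f_m\varphi_m\,dv=\sum_m\int Q_m(f)\varphi_m\,dv$ for all test sequences is equivalent to $\frac{d}{dt}f_m(v)=Q_m(f)(v)$ for all $m\ge1$, $v\in\mathbb{R}^n$.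
   Context: Let $n\ge1$ be an integer. Particle masses are positive integers. Given masses $m,m_1\ge1$, an integer $m'\in\{1,\dots,m+m_1-1\}$, $m'_1:=m+m_1-m'$, velocities $v,v_1\in\mathbb{R}^n$ and $\Omega\in\mathbb{S}^{n-1}$ with $\Omega\cdot(v-v_1)\le0$, the collision rule gives $v'=\frac{mv+m_1v_1}{m+m_1}+\frac{(mm_1)^{1/2}}{m+m_1}\big(\frac{m'_1}{m'}\big)^{1/2}\big[v-v_1-2((v-v_1)\cdot\Omega)\Omega\big]$, $v'_1=\frac{mv+m_1v_1}{m+m_1}-\frac{(mm_1)^{1/2}}{m+m_1}\big(\frac{m'}{m'_1}\big)^{1/2}\big[v-v_1-2((v-v_1)\cdot\Omega)\Omega\big]$. Let $A_{m,m_1;m'}\ge0$ (for $m,m_1\ge1$, $1\le m'\le m+m_1-1$) satisfy $A_{m,m_1;m'}=A_{m_1,m;m'}=A_{m,m_1;m+m_1-m'}$, and let $\mathbf B\ge0$ be a function of $(E,c)\in[0,\infty)\times[-1,1]$. Write $B_{m,m_1}(v,v_1,\Omega):=\mathbf B\big(\frac{mm_1}{m+m_1}|v-v_1|^2,\ \Omega\cdot\frac{v-v_1}{|v-v_1|}\big)$. For a sequence $f=(f_m)_{m\ge1}$ of functions on $\mathbb{R}^n$, the BME (Boltzmann mass-exchange) operator $Q(f)=(Q_m(f))_{m\ge1}$ is defined in weak form by: for every sequence of test functions $\varphi=(\varphi_m)_{m\ge1}$, $$\sum_{m\ge1}\int_{\mathbb{R}^n}Q_m(f)\varphi_m\,dv=\frac12\sum_{m,m_1\ge1}\sum_{m'=1}^{m+m_1-1}A_{m,m_1;m'}\int_{\{(v,v_1,\Omega)\in\mathbb{R}^{2n}\times\mathbb{S}^{n-1}:(v-v_1)\cdot\Omega\le0\}}B_{m,m_1}(v,v_1,\Omega)\big(\varphi_{m'}(v')+\varphi_{m'_1}(v'_1)-\varphi_m(v)-\varphi_{m_1}(v_1)\big)f_m(v)f_{m_1}(v_1)\,dv\,dv_1\,d\Omega,$$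 with $m'_1,v',v'_1$ given by the collision rule. *)

theory Defs
  imports "HOL-Analysis.Analysis"
begin

text \<open>Surface measure on the unit sphere S^{n-1} of R^n (n = DIM('a)), defined by the
  standard cone construction: sigma(A) = n * lambda({y. 0 < |y| <= 1, y/|y| in A}).\<close>
definition sphere_measure :: "'a::euclidean_space measure" where
  "sphere_measure =
     scale_measure (of_nat DIM('a))
       (distr (restrict_space lborel (cball 0 1 - {0})) (restrict_space borel (sphere 0 1))
              (\<lambda>y. y /\<^sub>R norm y))"

text \<open>Collision rule: incoming (m,v),(m1,v1), direction Omega, outgoing masses m', m1' = m+m1-m'.\<close>
definition coll_v :: "nat \<Rightarrow> nat \<Rightarrow> nat \<Rightarrow> 'a \<Rightarrow> 'a \<Rightarrow> 'a \<Rightarrow> 'a::euclidean_space" where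
  "coll_v m m1 m' v v1 \<Omega> =
     (1 / real (m + m1)) *\<^sub>R (real m *\<^sub>R v + real m1 *\<^sub>R v1)
     + (sqrt (real m * real m1) / real (m + m1) * sqrt (real (m + m1 - m') / real m'))
         *\<^sub>R (v - v1 - (2 * ((v - v1) \<bullet> \<Omega>)) *\<^sub>R \<Omega>)"

definition coll_v1 :: "nat \<Rightarrow> nat \<Rightarrow> nat \<Rightarrow> 'a \<Rightarrow> 'a \<Rightarrow> 'a \<Rightarrow> 'a::euclidean_space" where
  "coll_v1 m m1 m' v v1 \<Omega> =
     (1 / real (m + m1)) *\<^sub>R (real m *\<^sub>R v + real m1 *\<^sub>R v1)
     - (sqrt (real m * real m1) / real (m + m1) * sqrt (real m' / real (m + m1 - m')))
         *\<^sub>R (v - v1 - (2 * ((v - v1) \<bullet> \<Omega>)) *\<^sub>R \<Omega>)"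

definition cross_B :: "(real \<Rightarrow> real \<Rightarrow> real) \<Rightarrow> nat \<Rightarrow> nat \<Rightarrow> 'a::euclidean_space \<Rightarrow> 'a \<Rightarrow> 'a \<Rightarrow> real" where
  "cross_B B m m1 v v1 \<Omega> =
     B (real m * real m1 / real (m + m1) * (norm (v - v1))\<^sup>2)
       (\<Omega> \<bullet> ((v - v1) /\<^sub>R norm (v - v1)))"

definition precoll :: "('a::euclidean_space \<times> 'a \<times> 'a) set" where
  "precoll = {(v, v1, \<Omega>). (v - v1) \<bullet> \<Omega> \<le> 0}"

definition BME_weak_rhs ::
  "(nat \<Rightarrow> nat \<Rightarrow> nat \<Rightarrow> real) \<Rightarrow> (real \<Rightarrow> real \<Rightarrow> real) \<Rightarrow> (nat \<Rightarrow> 'a::euclidean_space \<Rightarrow> real)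
    \<Rightarrow> (nat \<Rightarrow> 'a \<Rightarrow> real) \<Rightarrow> real" where
  "BME_weak_rhs A B f \<phi> =
     1/2 * (\<Sum>\<^sub>\<infinity>(m, m1)\<in>{1..} \<times> {1..}. \<Sum>m'=1..m+m1-1. A m m1 m' *
        set_lebesgue_integral (lborel \<Otimes>\<^sub>M lborel \<Otimes>\<^sub>M sphere_measure) precoll
          (\<lambda>(v, v1, \<Omega>). cross_B B m m1 v v1 \<Omega>
              * (\<phi> m' (coll_v m m1 m' v v1 \<Omega>) + \<phi> (m + m1 - m') (coll_v1 m m1 m' v v1 \<Omega>)
                 - \<phi> m v - \<phi> m1 v1)
              * f m v * f m1 v1))"

definition BME_strong ::
  "(nat \<Rightarrow> nat \<Rightarrow> nat \<Rightarrow> real) \<Rightarrow> (real \<Rightarrow> real \<Rightarrow> real) \<Rightarrow> (nat \<Rightarrow> 'a::euclidean_space \<Rightarrow> real)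
    \<Rightarrow> nat \<Rightarrow> 'a \<Rightarrow> real" where
  "BME_strong A B f m v =
     (\<Sum>\<^sub>\<infinity>(m', m1')\<in>{(p, q). 1 \<le> p \<and> 1 \<le> q \<and> m + 1 \<le> p + q}.
        A m' m1' m *
        set_lebesgue_integral (lborel \<Otimes>\<^sub>M sphere_measure) {(v1, \<Omega>). (v - v1) \<bullet> \<Omega> \<le> 0}
          (\<lambda>(v1, \<Omega>). cross_B B m (m' + m1' - m) v v1 \<Omega>
              * f m' (coll_v m (m' + m1' - m) m' v v1 \<Omega>)
              * f m1' (coll_v1 m (m' + m1' - m) m' v v1 \<Omega>)
              * (real m * real (m' + m1' - m) / (real m' * real m1')) powr (real DIM('a) / 2)))
   - (\<Sum>\<^sub>\<infinity>m1\<in>{1..}. \<Sum>m'=1..m+m1-1. A m m1 m' *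
        set_lebesgue_integral (lborel \<Otimes>\<^sub>M sphere_measure) {(v1, \<Omega>). (v - v1) \<bullet> \<Omega> \<le> 0}
          (\<lambda>(v1, \<Omega>). cross_B B m m1 v v1 \<Omega> * f m v * f m1 v1))"

end

theory Submission
  imports Defs
begin

text \<open>In the weak form, exchanging the incoming particles, \<open>(v, v1, \<Omega>) \<mapsto> (v1, v, -\<Omega>)\<close> together with
  \<open>(m, m1, m') \<mapsto> (m1, m, m + m1 - m')\<close>, preserves the collision measure and the kernel, and so turns
  the terms in \<open>\<phi>(v1')\<close> and \<open>\<phi>(v1)\<close> into copies of those in \<open>\<phi>(v')\<close> and \<open>\<phi>(v)\<close>; this absorbs
  the factor \<open>1/2\<close>. The loss terms then match the tested strong loss term by Fubini. For the gain
  terms one substitutes the collision map \<open>(v, v1, \<Omega>) \<mapsto> (v', v1', -\<Omega>)\<close>: it is undone by the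
  collision with the roles of incoming and outgoing masses exchanged (microreversibility), it
  preserves the precollisional set and the cross section, and it is an affine map (shears, a
  reflection and a dilation by the ratio \<open>k\<close> of relative speeds) that multiplies Lebesgue measure by
  \<open>k^-n\<close>. As \<open>k^n\<close> is exactly the factor \<open>(m m1 / (m' m1'))^(n/2)\<close> of the strong gain term, each
  tested gain integral becomes a weak gain integral. The hypothesis on \<open>f\<close> and the boundedness of
  \<open>\<phi>\<close> justify all exchanges of sums and integrals.\<close>

section \<open>Countable sums and integrals\<close>

lemma integral_count_space_eq_infsum:
  fixes f :: "'i \<Rightarrow> real"
  shows "(\<integral>x. f x \<partial>count_space A) = (\<Sum>\<^sub>\<infinity>x\<in>A. f x)"
proof (cases "integrable (count_space A) f")
  case True
  then have "Infinite_Set_Sum.abs_summable_on f A"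
    by (simp add: Infinite_Set_Sum.abs_summable_on_def)
  then show ?thesis
    by (simp add: infsetsum_def[symmetric] infsetsum_infsum)
next
  case False
  then have "\<not> Infinite_Set_Sum.abs_summable_on f A"
    by (simp add: Infinite_Set_Sum.abs_summable_on_def)
  then have "\<not> f summable_on A"
    using abs_summable_equivalent summable_on_iff_abs_summable_on_real by blast
  then show ?thesis
    using False by (simp add: infsum_not_exists not_integrable_integral_eq)
qed

lemma summable_on_of_nn_integral_abs_finite:
  fixes f :: "'i \<Rightarrow> real"
  assumes "(\<integral>\<^sup>+x. ennreal \<bar>f x\<bar> \<partial>count_space A) < \<infinity>"
  shows "f summable_on A"
proof -
  have "integrable (count_space A) f"
    using assms by (intro integrableI_bounded) auto
  then have "Infinite_Set_Sum.abs_summable_on f A"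
    by (simp add: Infinite_Set_Sum.abs_summable_on_def)
  then show ?thesis
    using abs_summable_equivalent abs_summable_summable by blast
qed

lemma member_le_nn_integral_count_space:
  assumes "a \<in> A"
  shows "f a \<le> (\<integral>\<^sup>+x. f x \<partial>count_space A)"
proof -
  have "f a = (\<integral>\<^sup>+x. f x * indicator {a} x \<partial>count_space A)"
    using assms by simp
  also have "\<dots> \<le> (\<integral>\<^sup>+x. f x \<partial>count_space A)"
    by (intro nn_integral_mono) (auto split: split_indicator)
  finally show ?thesis .
qed

lemma nn_integral_count_space_Sigma:
  "(\<integral>\<^sup>+z. h z \<partial>count_space (Sigma A B)) = (\<integral>\<^sup>+a. (\<integral>\<^sup>+b. h (a, b) \<partial>count_space (B a)) \<partial>count_space A)"
proof -
  have "(\<integral>\<^sup>+z. h z \<partial>count_space (Sigma A B)) = (\<integral>\<^sup>+z. h z * indicator (Sigma A B) z \<partial>count_space UNIV)"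
    by (rule nn_integral_count_space_indicator) simp
  also have "\<dots> = (\<integral>\<^sup>+a. (\<integral>\<^sup>+b. h (a, b) * indicator (Sigma A B) (a, b) \<partial>count_space UNIV) \<partial>count_space UNIV)"
    by (rule nn_integral_fst_count_space[symmetric])
  also have "\<dots> = (\<integral>\<^sup>+a. (\<integral>\<^sup>+b. h (a, b) \<partial>count_space (B a)) * indicator A a \<partial>count_space UNIV)"
    by (intro nn_integral_cong)
       (auto simp: nn_integral_count_space_indicator indicator_def simp del: nn_integral_indicator_singleton)
  also have "\<dots> = (\<integral>\<^sup>+a. (\<integral>\<^sup>+b. h (a, b) \<partial>count_space (B a)) \<partial>count_space A)"
    by (simp add: nn_integral_count_space_indicator)
  finally show ?thesis .
qed

lemma has_sum_diff:
  fixes f g :: "'i \<Rightarrow> 'b::topological_ab_group_add"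
  assumes "(f has_sum a) I" and "(g has_sum b) I"
  shows "((\<lambda>x. f x - g x) has_sum (a - b)) I"
proof -
  have "((\<lambda>x. - g x) has_sum (- b)) I"
    using assms(2) by (simp add: has_sum_uminus)
  from has_sum_add[OF assms(1) this] show ?thesis
    by simp
qed

lemma abs_integral_le_nn_integral_abs:
  fixes g :: "'a \<Rightarrow> real"
  shows "ennreal \<bar>\<integral>x. g x \<partial>M\<bar> \<le> (\<integral>\<^sup>+x. ennreal \<bar>g x\<bar> \<partial>M)"
proof (cases "integrable M g")
  case True
  then show ?thesis
    using integral_norm_bound_ennreal[OF True] by simp
next
  case False
  then show ?thesis
    by (simp add: not_integrable_integral_eq)
qed

lemma integrable_mult_bounded:
  fixes f g :: "'a \<Rightarrow> real"
  assumes f: "integrable M f" and g: "g \<in> borel_measurable M" and bound: "\<And>x. \<bar>g x\<bar> \<le> c"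
  shows "integrable M (\<lambda>x. f x * g x)"
proof (rule Bochner_Integration.integrable_bound)
  show "integrable M (\<lambda>x. c * f x)"
    using f by simp
  show "AE x in M. norm (f x * g x) \<le> norm (c * f x)"
  proof (rule AE_I2)
    fix x
    have "\<bar>g x\<bar> * \<bar>f x\<bar> \<le> c * \<bar>f x\<bar>"
      using bound[of x] by (rule mult_right_mono) simp
    moreover have "0 \<le> c"
      using bound[of x] by linarith
    ultimately show "norm (f x * g x) \<le> norm (c * f x)"
      by (simp add: abs_mult mult.commute)
  qed
qed (use f g in simp)

lemma borel_measurable_integral_count_space_pair:
  fixes h :: "'j \<Rightarrow> 'a \<times> 'b \<Rightarrow> real"
  assumes N: "sigma_finite_measure N" and J: "countable J"
    and h: "\<And>j. j \<in> J \<Longrightarrow> h j \<in> borel_measurable (M \<Otimes>\<^sub>M N)"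
  shows "(\<lambda>(j, x). \<integral>y. h j (x, y) \<partial>N) \<in> borel_measurable (count_space J \<Otimes>\<^sub>M M)"
proof (rule measurable_pair_measure_countable1[OF J])
  interpret N: sigma_finite_measure N by (rule N)
  fix j assume "j \<in> J"
  then have "(\<lambda>(x, y). h j (x, y)) \<in> borel_measurable (M \<Otimes>\<^sub>M N)"
    using h by simp
  then show "(\<lambda>x. (\<lambda>(j, x). \<integral>y. h j (x, y) \<partial>N) (j, x)) \<in> borel_measurable M"
    using N.borel_measurable_lebesgue_integral by simp
qed

lemma nn_integral_integral_count_space_pair_le:
  fixes h :: "'j \<Rightarrow> 'a \<times> 'b \<Rightarrow> real"
  assumes M: "sigma_finite_measure M" and N: "sigma_finite_measure N" and J: "countable J"
    and h: "\<And>j. j \<in> J \<Longrightarrow> h j \<in> borel_measurable (M \<Otimes>\<^sub>M N)"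
  shows "(\<integral>\<^sup>+(j, x). ennreal \<bar>\<integral>y. h j (x, y) \<partial>N\<bar> \<partial>(count_space J \<Otimes>\<^sub>M M))
    \<le> (\<integral>\<^sup>+j. (\<integral>\<^sup>+z. ennreal \<bar>h j z\<bar> \<partial>(M \<Otimes>\<^sub>M N)) \<partial>count_space J)"
proof -
  interpret M: sigma_finite_measure M by (rule M)
  interpret N: sigma_finite_measure N by (rule N)
  have "(\<integral>\<^sup>+(j, x). ennreal \<bar>\<integral>y. h j (x, y) \<partial>N\<bar> \<partial>(count_space J \<Otimes>\<^sub>M M))
      = (\<integral>\<^sup>+j. (\<integral>\<^sup>+x. ennreal \<bar>\<integral>y. h j (x, y) \<partial>N\<bar> \<partial>M) \<partial>count_space J)"
    using borel_measurable_integral_count_space_pair[OF N J h]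
    by (subst M.nn_integral_fst[symmetric]) (auto simp: case_prod_beta')
  also have "\<dots> \<le> (\<integral>\<^sup>+j. (\<integral>\<^sup>+x. (\<integral>\<^sup>+y. ennreal \<bar>h j (x, y)\<bar> \<partial>N) \<partial>M) \<partial>count_space J)"
    by (intro nn_integral_mono abs_integral_le_nn_integral_abs)
  also have "\<dots> = (\<integral>\<^sup>+j. (\<integral>\<^sup>+z. ennreal \<bar>h j z\<bar> \<partial>(M \<Otimes>\<^sub>M N)) \<partial>count_space J)"
  proof (intro nn_integral_cong)
    fix j assume "j \<in> space (count_space J)"
    then have "(\<lambda>z. ennreal \<bar>h j z\<bar>) \<in> borel_measurable (M \<Otimes>\<^sub>M N)"
      using h by simp
    then show "(\<integral>\<^sup>+x. (\<integral>\<^sup>+y. ennreal \<bar>h j (x, y)\<bar> \<partial>N) \<partial>M) = (\<integral>\<^sup>+z. ennreal \<bar>h j z\<bar> \<partial>(M \<Otimes>\<^sub>M N))"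
      by (rule N.nn_integral_fst)
  qed
  finally show ?thesis .
qed

lemma
  fixes h :: "'j \<Rightarrow> 'a \<times> 'b \<Rightarrow> real"
  assumes M: "sigma_finite_measure M" and N: "sigma_finite_measure N"
    and J: "countable J"
    and h: "\<And>j. j \<in> J \<Longrightarrow> h j \<in> borel_measurable (M \<Otimes>\<^sub>M N)"
    and fin: "(\<integral>\<^sup>+j. (\<integral>\<^sup>+z. ennreal \<bar>h j z\<bar> \<partial>(M \<Otimes>\<^sub>M N)) \<partial>count_space J) < \<infinity>"
  shows integral_infsum_integral:
      "(\<integral>x. (\<Sum>\<^sub>\<infinity>j\<in>J. \<integral>y. h j (x, y) \<partial>N) \<partial>M) = (\<Sum>\<^sub>\<infinity>j\<in>J. \<integral>z. h j z \<partial>(M \<Otimes>\<^sub>M N))"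
    and abs_infsum_integral_le:
      "ennreal \<bar>\<Sum>\<^sub>\<infinity>j\<in>J. \<integral>z. h j z \<partial>(M \<Otimes>\<^sub>M N)\<bar>
         \<le> (\<integral>\<^sup>+j. (\<integral>\<^sup>+z. ennreal \<bar>h j z\<bar> \<partial>(M \<Otimes>\<^sub>M N)) \<partial>count_space J)"
    and integrable_infsum_integral: "integrable M (\<lambda>x. \<Sum>\<^sub>\<infinity>j\<in>J. \<integral>y. h j (x, y) \<partial>N)"
proof -
  interpret MN: pair_sigma_finite M N
    using M N by (intro pair_sigma_finite.intro)
  interpret J: sigma_finite_measure "count_space J"
    using J by (rule sigma_finite_measure_count_space_countable)
  interpret JM: pair_sigma_finite "count_space J" M
    using M by (intro pair_sigma_finite.intro) unfold_locales
  define G where "G = (\<lambda>(j, x). \<integral>y. h j (x, y) \<partial>N)"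
  have nn_G: "(\<integral>\<^sup>+z. ennreal (norm (G z)) \<partial>(count_space J \<Otimes>\<^sub>M M))
      \<le> (\<integral>\<^sup>+j. (\<integral>\<^sup>+z. ennreal \<bar>h j z\<bar> \<partial>(M \<Otimes>\<^sub>M N)) \<partial>count_space J)"
    using nn_integral_integral_count_space_pair_le[OF M N J h] by (simp add: G_def case_prod_beta')
  have integrable_G: "integrable (count_space J \<Otimes>\<^sub>M M) G"
    using nn_G fin borel_measurable_integral_count_space_pair[OF N J h] by (intro integrableI_bounded) (auto simp: G_def)
  then have integrable_G': "integrable (count_space J \<Otimes>\<^sub>M M) (\<lambda>(j, x). \<integral>y. h j (x, y) \<partial>N)"
    by (simp add: G_def)
  have integrable_h: "integrable (M \<Otimes>\<^sub>M N) (h j)" if "j \<in> J" for j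
  proof (rule integrableI_bounded)
    show "(\<integral>\<^sup>+z. ennreal (norm (h j z)) \<partial>(M \<Otimes>\<^sub>M N)) < \<infinity>"
      using member_le_nn_integral_count_space[OF that, of "\<lambda>j. \<integral>\<^sup>+z. ennreal \<bar>h j z\<bar> \<partial>(M \<Otimes>\<^sub>M N)"] fin
      by simp
  qed (rule h[OF that])
  have "(\<Sum>\<^sub>\<infinity>j\<in>J. \<integral>z. h j z \<partial>(M \<Otimes>\<^sub>M N)) = (\<integral>j. (\<integral>x. G (j, x) \<partial>M) \<partial>count_space J)"
    unfolding integral_count_space_eq_infsum G_def
    by (intro infsum_cong) (simp add: MN.integral_fst'[OF integrable_h])
  also have "\<dots> = integral\<^sup>L (count_space J \<Otimes>\<^sub>M M) G"
    using JM.integral_fst[OF integrable_G'] by (simp add: G_def)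
  finally have sum_eq: "(\<Sum>\<^sub>\<infinity>j\<in>J. \<integral>z. h j z \<partial>(M \<Otimes>\<^sub>M N)) = integral\<^sup>L (count_space J \<Otimes>\<^sub>M M) G" .
  show "(\<integral>x. (\<Sum>\<^sub>\<infinity>j\<in>J. \<integral>y. h j (x, y) \<partial>N) \<partial>M) = (\<Sum>\<^sub>\<infinity>j\<in>J. \<integral>z. h j z \<partial>(M \<Otimes>\<^sub>M N))"
    using JM.integral_snd[OF integrable_G'] unfolding sum_eq
    by (simp add: G_def integral_count_space_eq_infsum)
  show "ennreal \<bar>\<Sum>\<^sub>\<infinity>j\<in>J. \<integral>z. h j z \<partial>(M \<Otimes>\<^sub>M N)\<bar>
      \<le> (\<integral>\<^sup>+j. (\<integral>\<^sup>+z. ennreal \<bar>h j z\<bar> \<partial>(M \<Otimes>\<^sub>M N)) \<partial>count_space J)"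
    unfolding sum_eq using integral_norm_bound_ennreal[OF integrable_G] nn_G by simp
  show "integrable M (\<lambda>x. \<Sum>\<^sub>\<infinity>j\<in>J. \<integral>y. h j (x, y) \<partial>N)"
    using JM.integrable_snd[OF integrable_G'] by (simp add: integral_count_space_eq_infsum)
qed

lemma
  fixes h :: "'i \<Rightarrow> 'j \<Rightarrow> 'a \<times> 'b \<Rightarrow> real"
  assumes M: "sigma_finite_measure M" and N: "sigma_finite_measure N"
    and J: "\<And>i. countable (J i)"
    and h: "\<And>i j. i \<in> I \<Longrightarrow> j \<in> J i \<Longrightarrow> h i j \<in> borel_measurable (M \<Otimes>\<^sub>M N)"
    and fin: "(\<integral>\<^sup>+i. (\<integral>\<^sup>+j. (\<integral>\<^sup>+z. ennreal \<bar>h i j z\<bar> \<partial>(M \<Otimes>\<^sub>M N)) \<partial>count_space (J i)) \<partial>count_space I) < \<infinity>"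
  shows has_sum_integral_infsum_integral:
      "((\<lambda>i. \<integral>x. (\<Sum>\<^sub>\<infinity>j\<in>J i. \<integral>y. h i j (x, y) \<partial>N) \<partial>M)
         has_sum (\<Sum>\<^sub>\<infinity>i\<in>I. \<Sum>\<^sub>\<infinity>j\<in>J i. \<integral>z. h i j z \<partial>(M \<Otimes>\<^sub>M N))) I"
    and integrable_infsum_integral_member:
      "i \<in> I \<Longrightarrow> integrable M (\<lambda>x. \<Sum>\<^sub>\<infinity>j\<in>J i. \<integral>y. h i j (x, y) \<partial>N)"
proof -
  define F where "F i = (\<integral>\<^sup>+j. (\<integral>\<^sup>+z. ennreal \<bar>h i j z\<bar> \<partial>(M \<Otimes>\<^sub>M N)) \<partial>count_space (J i))" for i
  define X where "X i = (\<Sum>\<^sub>\<infinity>j\<in>J i. \<integral>z. h i j z \<partial>(M \<Otimes>\<^sub>M N))" for i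
  have F_fin: "F i < \<infinity>" if "i \<in> I" for i
    using member_le_nn_integral_count_space[OF that, of F] fin unfolding F_def by (auto intro: le_less_trans)
  have single: "(\<integral>x. (\<Sum>\<^sub>\<infinity>j\<in>J i. \<integral>y. h i j (x, y) \<partial>N) \<partial>M) = X i"
      "ennreal \<bar>X i\<bar> \<le> F i"
      "integrable M (\<lambda>x. \<Sum>\<^sub>\<infinity>j\<in>J i. \<integral>y. h i j (x, y) \<partial>N)" if i: "i \<in> I" for i
    using integral_infsum_integral[OF M N J h[OF i] F_fin[OF i, unfolded F_def]]
      abs_infsum_integral_le[OF M N J h[OF i] F_fin[OF i, unfolded F_def]]
      integrable_infsum_integral[OF M N J h[OF i] F_fin[OF i, unfolded F_def]]
    by (simp_all add: X_def F_def)
  show "i \<in> I \<Longrightarrow> integrable M (\<lambda>x. \<Sum>\<^sub>\<infinity>j\<in>J i. \<integral>y. h i j (x, y) \<partial>N)"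
    by (rule single(3))
  have "(\<integral>\<^sup>+i. ennreal \<bar>X i\<bar> \<partial>count_space I) \<le> (\<integral>\<^sup>+i. F i \<partial>count_space I)"
    using single(2) by (intro nn_integral_mono) simp
  also have "\<dots> < \<infinity>"
    using fin unfolding F_def .
  finally have "X summable_on I"
    by (rule summable_on_of_nn_integral_abs_finite)
  then have "(X has_sum (\<Sum>\<^sub>\<infinity>i\<in>I. X i)) I"
    by simp
  then show "((\<lambda>i. \<integral>x. (\<Sum>\<^sub>\<infinity>j\<in>J i. \<integral>y. h i j (x, y) \<partial>N) \<partial>M)
      has_sum (\<Sum>\<^sub>\<infinity>i\<in>I. \<Sum>\<^sub>\<infinity>j\<in>J i. \<integral>z. h i j z \<partial>(M \<Otimes>\<^sub>M N))) I"
    using single(1) by (subst has_sum_cong) (auto simp: X_def)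
qed

section \<open>Maps that rescale a measure\<close>

definition scales :: "'a measure \<Rightarrow> ('a \<Rightarrow> 'a) \<Rightarrow> ennreal \<Rightarrow> bool" where
  "scales M T c \<longleftrightarrow> T \<in> measurable M M \<and>
     (\<forall>g::'a \<Rightarrow> ennreal. g \<in> borel_measurable M \<longrightarrow> (\<integral>\<^sup>+x. g (T x) \<partial>M) = c * (\<integral>\<^sup>+x. g x \<partial>M))"

lemma scalesI:
  assumes "T \<in> measurable M M"
    and "\<And>g::'a \<Rightarrow> ennreal. g \<in> borel_measurable M \<Longrightarrow> (\<integral>\<^sup>+x. g (T x) \<partial>M) = c * (\<integral>\<^sup>+x. g x \<partial>M)"
  shows "scales M T c"
  using assms unfolding scales_def by blast

lemma scales_measurable: "scales M T c \<Longrightarrow> T \<in> measurable M M"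
  unfolding scales_def by blast

lemma scales_nn_integral:
  "scales M T c \<Longrightarrow> g \<in> borel_measurable M \<Longrightarrow> (\<integral>\<^sup>+x. g (T x) \<partial>M) = c * (\<integral>\<^sup>+x. g x \<partial>M)"
  unfolding scales_def by blast

lemma scales_comp:
  assumes T: "scales M T c" and S: "scales M S d"
  shows "scales M (\<lambda>x. S (T x)) (c * d)"
proof (rule scalesI)
  show "(\<lambda>x. S (T x)) \<in> measurable M M"
    using scales_measurable[OF T] scales_measurable[OF S] by (rule measurable_compose)
  fix g :: "'a \<Rightarrow> ennreal" assume g: "g \<in> borel_measurable M"
  have "(\<lambda>x. g (S x)) \<in> borel_measurable M"
    using scales_measurable[OF S] g by (rule measurable_compose)
  then have "(\<integral>\<^sup>+x. g (S (T x)) \<partial>M) = c * (\<integral>\<^sup>+x. g (S x) \<partial>M)"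
    by (rule scales_nn_integral[OF T])
  also have "\<dots> = c * d * (\<integral>\<^sup>+x. g x \<partial>M)"
    using scales_nn_integral[OF S g] by (simp add: mult.assoc)
  finally show "(\<integral>\<^sup>+x. g (S (T x)) \<partial>M) = c * d * (\<integral>\<^sup>+x. g x \<partial>M)" .
qed

lemma scales_cong:
  assumes "scales M T c" and "\<And>x. x \<in> space M \<Longrightarrow> T x = S x" and "c = d"
  shows "scales M S d"
proof (rule scalesI)
  show "S \<in> measurable M M"
    using scales_measurable[OF assms(1)] assms(2) by (metis measurable_cong)
  fix g :: "'a \<Rightarrow> ennreal" assume g: "g \<in> borel_measurable M"
  have "(\<integral>\<^sup>+x. g (S x) \<partial>M) = (\<integral>\<^sup>+x. g (T x) \<partial>M)"
    using assms(2) by (intro nn_integral_cong) simp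
  then show "(\<integral>\<^sup>+x. g (S x) \<partial>M) = d * (\<integral>\<^sup>+x. g x \<partial>M)"
    using scales_nn_integral[OF assms(1) g] assms(3) by simp
qed

lemma scales_distr:
  assumes T: "scales M T c"
  shows "distr M M T = density M (\<lambda>_. c)"
proof (rule measure_eqI)
  fix A assume "A \<in> sets (distr M M T)"
  then have A: "A \<in> sets M" by simp
  have T_meas: "T \<in> measurable M M"
    by (rule scales_measurable[OF T])
  have "emeasure (distr M M T) A = (\<integral>\<^sup>+x. indicator (T -` A \<inter> space M) x \<partial>M)"
    using T_meas A by (simp add: emeasure_distr measurable_sets)
  also have "\<dots> = (\<integral>\<^sup>+x. indicator A (T x) \<partial>M)"
    by (intro nn_integral_cong) (auto split: split_indicator)
  also have "\<dots> = c * (\<integral>\<^sup>+x. indicator A x \<partial>M)"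
    using A by (intro scales_nn_integral[OF T]) simp
  also have "\<dots> = emeasure (density M (\<lambda>_. c)) A"
    using A by (simp add: emeasure_density nn_integral_cmult_indicator)
  finally show "emeasure (distr M M T) A = emeasure (density M (\<lambda>_. c)) A" .
qed simp

lemma scales_integral:
  fixes f :: "'a \<Rightarrow> real"
  assumes T: "scales M T (ennreal c)" and c: "0 \<le> c" and f: "f \<in> borel_measurable M"
  shows "(\<integral>x. f (T x) \<partial>M) = c * (\<integral>x. f x \<partial>M)"
proof -
  have "(\<integral>x. f (T x) \<partial>M) = integral\<^sup>L (density M (\<lambda>_. ennreal c)) f"
    using integral_distr[OF scales_measurable[OF T] f] by (simp add: scales_distr[OF T])
  also have "\<dots> = c * (\<integral>x. f x \<partial>M)"
    using f c by (simp add: integral_density)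
  finally show ?thesis .
qed

lemma scales_pair_measure_snd:
  assumes N: "sigma_finite_measure N"
    and T: "(\<lambda>z. T (fst z) (snd z)) \<in> measurable (M \<Otimes>\<^sub>M N) N"
    and scales_T: "\<And>x. x \<in> space M \<Longrightarrow> scales N (T x) c"
  shows "scales (M \<Otimes>\<^sub>M N) (\<lambda>z. (fst z, T (fst z) (snd z))) c"
proof (rule scalesI)
  interpret N: sigma_finite_measure N by (rule N)
  show meas: "(\<lambda>z. (fst z, T (fst z) (snd z))) \<in> measurable (M \<Otimes>\<^sub>M N) (M \<Otimes>\<^sub>M N)"
    using T by (intro measurable_Pair) auto
  fix g :: "_ \<Rightarrow> ennreal" assume g: "g \<in> borel_measurable (M \<Otimes>\<^sub>M N)"
  have "(\<integral>\<^sup>+z. g (fst z, T (fst z) (snd z)) \<partial>(M \<Otimes>\<^sub>M N)) = (\<integral>\<^sup>+x. (\<integral>\<^sup>+y. g (x, T x y) \<partial>N) \<partial>M)"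
    using N.nn_integral_fst[OF measurable_compose[OF meas g]] by simp
  also have "\<dots> = (\<integral>\<^sup>+x. c * (\<integral>\<^sup>+y. g (x, y) \<partial>N) \<partial>M)"
    using g by (intro nn_integral_cong scales_nn_integral[OF scales_T, of _ "\<lambda>y. g (_, y)"]) simp_all
  also have "\<dots> = c * (\<integral>\<^sup>+z. g z \<partial>(M \<Otimes>\<^sub>M N))"
    using g by (simp add: nn_integral_cmult N.borel_measurable_nn_integral_fst N.nn_integral_fst)
  finally show "(\<integral>\<^sup>+z. g (fst z, T (fst z) (snd z)) \<partial>(M \<Otimes>\<^sub>M N)) = c * (\<integral>\<^sup>+z. g z \<partial>(M \<Otimes>\<^sub>M N))" .
qed

lemma scales_pair_measure_fst:
  assumes M: "sigma_finite_measure M" and N: "sigma_finite_measure N"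
    and T: "(\<lambda>z. T (snd z) (fst z)) \<in> measurable (M \<Otimes>\<^sub>M N) M"
    and scales_T: "\<And>y. y \<in> space N \<Longrightarrow> scales M (T y) c"
  shows "scales (M \<Otimes>\<^sub>M N) (\<lambda>z. (T (snd z) (fst z), snd z)) c"
proof (rule scalesI)
  interpret M: sigma_finite_measure M by (rule M)
  interpret N: sigma_finite_measure N by (rule N)
  interpret MN: pair_sigma_finite M N ..
  show meas: "(\<lambda>z. (T (snd z) (fst z), snd z)) \<in> measurable (M \<Otimes>\<^sub>M N) (M \<Otimes>\<^sub>M N)"
    using T by (intro measurable_Pair) auto
  fix g :: "_ \<Rightarrow> ennreal" assume g: "g \<in> borel_measurable (M \<Otimes>\<^sub>M N)"
  have "(\<integral>\<^sup>+z. g (T (snd z) (fst z), snd z) \<partial>(M \<Otimes>\<^sub>M N)) = (\<integral>\<^sup>+y. (\<integral>\<^sup>+x. g (T y x, y) \<partial>M) \<partial>N)"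
    using MN.nn_integral_snd[OF measurable_compose[OF meas g]] by simp
  also have "\<dots> = (\<integral>\<^sup>+y. c * (\<integral>\<^sup>+x. g (x, y) \<partial>M) \<partial>N)"
    using g by (intro nn_integral_cong scales_nn_integral[OF scales_T, of _ "\<lambda>x. g (x, _)"]) simp_all
  also have "\<dots> = c * (\<integral>\<^sup>+z. g z \<partial>(M \<Otimes>\<^sub>M N))"
    using g M.borel_measurable_nn_integral_fst[OF measurable_pair_swap[OF g]]
    by (simp add: nn_integral_cmult MN.nn_integral_snd)
  finally show "(\<integral>\<^sup>+z. g (T (snd z) (fst z), snd z) \<partial>(M \<Otimes>\<^sub>M N)) = c * (\<integral>\<^sup>+z. g z \<partial>(M \<Otimes>\<^sub>M N))" .
qed

section \<open>Shears and reflections of Lebesgue measure\<close>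

lemma nn_integral_lborel_split_Basis:
  fixes b :: "'a::euclidean_space" and h :: "'a \<Rightarrow> ennreal"
  assumes b: "b \<in> Basis" and h[measurable]: "h \<in> borel_measurable borel"
  shows "(\<integral>\<^sup>+u. h u \<partial>lborel) =
    (\<integral>\<^sup>+x. (\<integral>\<^sup>+y. h ((\<Sum>b'\<in>Basis - {b}. x b' *\<^sub>R b') + y *\<^sub>R b) \<partial>lborel) \<partial>Pi\<^sub>M (Basis - {b}) (\<lambda>_. lborel))"
proof -
  interpret product_sigma_finite "\<lambda>_::'a. lborel :: real measure"
    by standard
  define I where "I = Basis - {b}"
  have Basis_eq: "(Basis::'a set) = insert b I" and "b \<notin> I" and "finite I"
    using b by (auto simp: I_def)
  have E: "(\<Sum>b'\<in>Basis. (x(b := y)) b' *\<^sub>R b') = (\<Sum>b'\<in>I. x b' *\<^sub>R b') + y *\<^sub>R b" for x y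
  proof -
    have "(\<Sum>b'\<in>I. (x(b := y)) b' *\<^sub>R b') = (\<Sum>b'\<in>I. x b' *\<^sub>R b')"
      using \<open>b \<notin> I\<close> by (intro sum.cong) auto
    then show ?thesis
      unfolding Basis_eq using \<open>finite I\<close> \<open>b \<notin> I\<close> by (simp add: add.commute)
  qed
  have "(\<integral>\<^sup>+u. h u \<partial>lborel) = (\<integral>\<^sup>+x. h (\<Sum>b'\<in>Basis. x b' *\<^sub>R b') \<partial>Pi\<^sub>M (insert b I) (\<lambda>_. lborel))"
    by (subst lborel_eq) (simp add: nn_integral_distr Basis_eq[symmetric])
  also have "\<dots> = (\<integral>\<^sup>+x. (\<integral>\<^sup>+y. h (\<Sum>b'\<in>Basis. (x(b := y)) b' *\<^sub>R b') \<partial>lborel) \<partial>Pi\<^sub>M I (\<lambda>_. lborel))"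
    by (rule product_nn_integral_insert[OF \<open>finite I\<close> \<open>b \<notin> I\<close>]) (simp add: Basis_eq[symmetric])
  also have "\<dots> = (\<integral>\<^sup>+x. (\<integral>\<^sup>+y. h ((\<Sum>b'\<in>I. x b' *\<^sub>R b') + y *\<^sub>R b) \<partial>lborel) \<partial>Pi\<^sub>M I (\<lambda>_. lborel))"
    by (simp only: E)
  finally show ?thesis
    unfolding I_def .
qed

lemma nn_integral_lborel_shear:
  fixes a b :: "'a::euclidean_space" and g :: "'a \<Rightarrow> ennreal"
  assumes b: "b \<in> Basis" and k: "1 + a \<bullet> b \<noteq> 0" and g[measurable]: "g \<in> borel_measurable borel"
  shows "(\<integral>\<^sup>+u. g (u + (u \<bullet> a) *\<^sub>R b) \<partial>lborel) = ennreal (1 / \<bar>1 + a \<bullet> b\<bar>) * (\<integral>\<^sup>+u. g u \<partial>lborel)"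
proof -
  define \<kappa> where "\<kappa> = 1 + a \<bullet> b"
  define V :: "('a \<Rightarrow> real) \<Rightarrow> 'a" where "V x = (\<Sum>b'\<in>Basis - {b}. x b' *\<^sub>R b')" for x
  have "V x \<bullet> b = 0" for x
    unfolding V_def using b by (auto simp: inner_sum_left inner_Basis intro!: sum.neutral)
  then have shear_V: "(V x + y *\<^sub>R b) + ((V x + y *\<^sub>R b) \<bullet> a) *\<^sub>R b = V x + (V x \<bullet> a + \<kappa> * y) *\<^sub>R b" for x y
    unfolding \<kappa>_def by (simp add: inner_add_left algebra_simps inner_commute)
  have fibre: "(\<integral>\<^sup>+y. g (V x + (V x \<bullet> a + \<kappa> * y) *\<^sub>R b) \<partial>lborel)
      = ennreal (1 / \<bar>\<kappa>\<bar>) * (\<integral>\<^sup>+y. g (V x + y *\<^sub>R b) \<partial>lborel)" for x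
  proof -
    have "(\<integral>\<^sup>+y. g (V x + y *\<^sub>R b) \<partial>lborel) = ennreal \<bar>\<kappa>\<bar> * (\<integral>\<^sup>+y. g (V x + (V x \<bullet> a + \<kappa> * y) *\<^sub>R b) \<partial>lborel)"
      using k unfolding \<kappa>_def[symmetric]
      by (intro nn_integral_real_affine[where f="\<lambda>z. g (V x + z *\<^sub>R b)"]) auto
    moreover have "ennreal (1 / \<bar>\<kappa>\<bar>) * ennreal \<bar>\<kappa>\<bar> = 1"
      using k unfolding \<kappa>_def[symmetric] by (simp add: ennreal_mult[symmetric])
    ultimately show ?thesis
      by (simp add: mult.assoc[symmetric])
  qed
  have "(\<integral>\<^sup>+u. g (u + (u \<bullet> a) *\<^sub>R b) \<partial>lborel)
      = (\<integral>\<^sup>+x. ennreal (1 / \<bar>\<kappa>\<bar>) * (\<integral>\<^sup>+y. g (V x + y *\<^sub>R b) \<partial>lborel) \<partial>Pi\<^sub>M (Basis - {b}) (\<lambda>_. lborel))"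
    by (subst nn_integral_lborel_split_Basis[OF b]) (simp_all add: V_def[symmetric] shear_V fibre)
  also have "\<dots> = ennreal (1 / \<bar>\<kappa>\<bar>) * (\<integral>\<^sup>+u. g u \<partial>lborel)"
    unfolding nn_integral_lborel_split_Basis[OF b g] V_def by (rule nn_integral_cmult) measurable
  finally show ?thesis
    unfolding \<kappa>_def .
qed

lemma scales_lborel_shear:
  fixes a b :: "'a::euclidean_space"
  assumes "b \<in> Basis" and "1 + a \<bullet> b \<noteq> 0"
  shows "scales lborel (\<lambda>u. u + (u \<bullet> a) *\<^sub>R b) (ennreal (1 / \<bar>1 + a \<bullet> b\<bar>))"
  using nn_integral_lborel_shear[OF assms] by (intro scalesI) simp_all

lemma scales_lborel_affine:
  fixes t :: "'a::euclidean_space"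
  assumes c: "c \<noteq> 0"
  shows "scales lborel (\<lambda>u. t + c *\<^sub>R u) (ennreal (1 / \<bar>c\<bar> ^ DIM('a)))"
proof (rule scalesI)
  fix g :: "'a \<Rightarrow> ennreal" assume "g \<in> borel_measurable lborel"
  then have g[measurable]: "g \<in> borel_measurable borel" by simp
  have "(\<integral>\<^sup>+x. g x \<partial>lborel) = ennreal (\<bar>c\<bar> ^ DIM('a)) * (\<integral>\<^sup>+x. g (t + c *\<^sub>R x) \<partial>lborel)"
    by (subst lborel_affine[OF c, of t]) (simp add: nn_integral_density nn_integral_distr nn_integral_cmult)
  moreover have "ennreal (1 / \<bar>c\<bar> ^ DIM('a)) * ennreal (\<bar>c\<bar> ^ DIM('a)) = 1"
    using c by (simp add: ennreal_mult[symmetric])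
  ultimately show "(\<integral>\<^sup>+x. g (t + c *\<^sub>R x) \<partial>lborel) = ennreal (1 / \<bar>c\<bar> ^ DIM('a)) * (\<integral>\<^sup>+x. g x \<partial>lborel)"
    by (simp add: mult.assoc[symmetric])
qed simp

lemma scales_lborel_translation: "scales lborel (\<lambda>u::'a::euclidean_space. u + t) 1"
  by (rule scales_cong[OF scales_lborel_affine[of 1 t]]) auto

lemma scales_lborel_diff: "scales lborel (\<lambda>u::'a::euclidean_space. u - t) 1"
  by (rule scales_cong[OF scales_lborel_translation[of "- t"]]) auto

lemma scales_lborel_uminus: "scales lborel (uminus :: 'a::euclidean_space \<Rightarrow> 'a) 1"
  by (rule scales_cong[OF scales_lborel_affine[of "-1" 0]]) auto

lemma scales_lborel_shear_sum_Basis: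
  fixes d e :: "'a::euclidean_space"
  assumes e: "e \<in> Basis" and S: "S \<subseteq> Basis - {e}"
  shows "scales lborel (\<lambda>u. u + (u \<bullet> e) *\<^sub>R (\<Sum>b\<in>S. (d \<bullet> b) *\<^sub>R b)) 1"
proof -
  have "finite S"
    using S finite_Basis by (metis finite_Diff finite_subset)
  then show ?thesis
    using S
  proof (induction S)
    case empty
    show ?case
      by (rule scales_cong[OF scales_lborel_translation[of 0]]) auto
  next
    case (insert b S)
    have b: "b \<in> Basis" "b \<noteq> e"
      using insert by auto
    have shear_b: "scales lborel (\<lambda>u. u + (u \<bullet> ((d \<bullet> b) *\<^sub>R e)) *\<^sub>R b) 1"
      using scales_lborel_shear[OF b(1), of "(d \<bullet> b) *\<^sub>R e"] b e by (simp add: inner_Basis)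
    have S_Basis: "x \<in> Basis" "x \<noteq> e" if "x \<in> S" for x
      using insert.prems that by auto
    then have "(\<Sum>b\<in>S. (d \<bullet> b) *\<^sub>R b) \<bullet> e = 0"
      using e by (auto simp: inner_sum_left inner_Basis intro!: sum.neutral)
    then show ?case
      using insert.hyps e S_Basis
      by (intro scales_cong[OF scales_comp[OF insert.IH shear_b]])
         (auto simp: inner_add_left inner_commute[of _ e] algebra_simps inner_Basis)
  qed
qed

lemma scales_lborel_shear_orthogonal:
  fixes d e :: "'a::euclidean_space"
  assumes e: "e \<in> Basis" and de: "d \<bullet> e = 0"
  shows "scales lborel (\<lambda>u. u + (u \<bullet> e) *\<^sub>R d) 1"
proof -
  have "(\<Sum>b\<in>Basis - {e}. (d \<bullet> b) *\<^sub>R b) = (\<Sum>b\<in>Basis. (d \<bullet> b) *\<^sub>R b)"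
    using e de by (intro sum.mono_neutral_left) auto
  then show ?thesis
    using scales_lborel_shear_sum_Basis[OF e order_refl, of d] by (simp add: euclidean_representation)
qed

definition reflect :: "'a \<Rightarrow> 'a \<Rightarrow> 'a::real_inner" where
  "reflect \<Omega> u = u - (2 * (u \<bullet> \<Omega>)) *\<^sub>R \<Omega>"

lemma reflect_uminus [simp]: "reflect (- \<Omega>) u = reflect \<Omega> u"
  by (simp add: reflect_def)

lemma reflect_scaleR: "reflect \<Omega> (c *\<^sub>R u) = c *\<^sub>R reflect \<Omega> u"
  by (simp add: reflect_def algebra_simps)

lemma inner_reflect: "norm \<Omega> = 1 \<Longrightarrow> reflect \<Omega> u \<bullet> \<Omega> = - (u \<bullet> \<Omega>)"
  by (simp add: reflect_def inner_diff_left dot_square_norm)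

lemma reflect_reflect: "norm \<Omega> = 1 \<Longrightarrow> reflect \<Omega> (reflect \<Omega> u) = u"
  using inner_reflect[of \<Omega> u] by (simp add: reflect_def[of _ "reflect \<Omega> u"]) (simp add: reflect_def)

lemma norm_reflect:
  assumes "norm \<Omega> = 1"
  shows "norm (reflect \<Omega> u) = norm u"
proof -
  have "\<Omega> \<bullet> \<Omega> = 1"
    using assms by (simp add: dot_square_norm)
  then have "reflect \<Omega> u \<bullet> reflect \<Omega> u = u \<bullet> u"
    unfolding reflect_def
    by (simp add: inner_diff_left inner_diff_right inner_commute algebra_simps del: dot_square_norm)
  then show ?thesis
    by (simp add: norm_eq_sqrt_inner del: dot_square_norm)
qed

lemma
  fixes \<Omega> e :: "'a::euclidean_space"
  assumes "norm \<Omega> = 1" and "e \<in> Basis"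
  shows inner_Basis_orthogonal_part: "(\<Omega> - (\<Omega> \<bullet> e) *\<^sub>R e) \<bullet> e = 0"
    and inner_self_orthogonal_part: "(\<Omega> - (\<Omega> \<bullet> e) *\<^sub>R e) \<bullet> (\<Omega> - (\<Omega> \<bullet> e) *\<^sub>R e) = 1 - (\<Omega> \<bullet> e)\<^sup>2"
proof -
  have "\<Omega> \<bullet> \<Omega> = 1" and "e \<bullet> e = 1"
    using assms by (simp_all add: dot_square_norm)
  then show "(\<Omega> - (\<Omega> \<bullet> e) *\<^sub>R e) \<bullet> e = 0"
    and "(\<Omega> - (\<Omega> \<bullet> e) *\<^sub>R e) \<bullet> (\<Omega> - (\<Omega> \<bullet> e) *\<^sub>R e) = 1 - (\<Omega> \<bullet> e)\<^sup>2"
    by (simp_all add: inner_diff_left inner_diff_right inner_commute power2_eq_square del: dot_square_norm)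
qed

text \<open>With \<open>\<alpha> = \<Omega> \<bullet> e \<noteq> 0\<close> and \<open>\<beta> = \<Omega> - \<alpha> e\<close>, the reflection is a shear along \<open>e\<close> conjugated by
  a shear that moves \<open>e\<close> to \<open>e - \<beta> / \<alpha>\<close>; all three shears preserve Lebesgue measure.\<close>

lemma reflect_eq_shears:
  fixes \<Omega> e :: "'a::euclidean_space"
  assumes n: "norm \<Omega> = 1" and e: "e \<in> Basis" and \<alpha>: "\<alpha> = \<Omega> \<bullet> e" "\<alpha> \<noteq> 0" and \<beta>: "\<beta> = \<Omega> - \<alpha> *\<^sub>R e"
  shows "reflect \<Omega> u =
    (\<lambda>u. u + (u \<bullet> e) *\<^sub>R ((1 / \<alpha>) *\<^sub>R \<beta>))
      ((\<lambda>u. u + (u \<bullet> ((-2) *\<^sub>R e - (2 * \<alpha>) *\<^sub>R \<beta>)) *\<^sub>R e) (u + (u \<bullet> e) *\<^sub>R ((- 1 / \<alpha>) *\<^sub>R \<beta>)))"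
proof -
  have ee: "e \<bullet> e = 1" and \<beta>e: "\<beta> \<bullet> e = 0" and \<beta>\<beta>: "\<beta> \<bullet> \<beta> = 1 - \<alpha>\<^sup>2"
    using e inner_Basis_orthogonal_part[OF n e] inner_self_orthogonal_part[OF n e] by (simp_all add: \<alpha> \<beta>)
  define x where "x = u \<bullet> e"
  define t where "t = u \<bullet> \<beta>"
  define u1 where "u1 = u - (x / \<alpha>) *\<^sub>R \<beta>"
  define s where "s = u1 \<bullet> ((-2) *\<^sub>R e - (2 * \<alpha>) *\<^sub>R \<beta>)"
  have u1e: "u1 \<bullet> e = x"
    unfolding u1_def x_def using \<beta>e by (simp add: inner_diff_left)
  have "u1 \<bullet> \<beta> = t - x / \<alpha> * (1 - \<alpha>\<^sup>2)"
    unfolding u1_def t_def using \<beta>\<beta> by (simp add: inner_diff_left)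
  then have s_eq: "s = -2 * \<alpha> * (\<alpha> * x + t)" and s_div: "s / \<alpha> = -2 * (\<alpha> * x + t)"
    unfolding s_def using u1e \<alpha>(2)
    by (simp_all add: inner_diff_right inner_commute[of u1] field_simps power2_eq_square)
  have \<Omega>_eq: "\<Omega> = \<alpha> *\<^sub>R e + \<beta>"
    using \<beta> by simp
  have "u \<bullet> \<Omega> = \<alpha> * x + t"
    unfolding \<Omega>_eq x_def t_def by (simp add: inner_add_right)
  then have "reflect \<Omega> u = u - (2 * (\<alpha> * x + t)) *\<^sub>R (\<alpha> *\<^sub>R e + \<beta>)"
    unfolding reflect_def by (subst (2) \<Omega>_eq) simp
  then have "u + s *\<^sub>R e + (s / \<alpha>) *\<^sub>R \<beta> = reflect \<Omega> u"
    unfolding s_div unfolding s_eq by (simp add: algebra_simps)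
  moreover have "(u1 + s *\<^sub>R e) + ((u1 + s *\<^sub>R e) \<bullet> e) *\<^sub>R ((1 / \<alpha>) *\<^sub>R \<beta>) = u + s *\<^sub>R e + (s / \<alpha>) *\<^sub>R \<beta>"
    using u1e ee unfolding u1_def by (simp add: inner_add_left algebra_simps add_divide_distrib)
  ultimately show ?thesis
    unfolding s_def u1_def x_def by simp
qed

lemma scales_lborel_reflect:
  fixes \<Omega> :: "'a::euclidean_space"
  assumes n: "norm \<Omega> = 1"
  shows "scales lborel (reflect \<Omega>) 1"
proof -
  obtain e where e: "e \<in> Basis" and \<alpha>: "\<Omega> \<bullet> e \<noteq> 0"
    using n euclidean_all_zero_iff[of \<Omega>] by auto
  define \<beta> where "\<beta> = \<Omega> - (\<Omega> \<bullet> e) *\<^sub>R e"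
  define a where "a = (-2) *\<^sub>R e - (2 * (\<Omega> \<bullet> e)) *\<^sub>R \<beta>"
  have ae: "1 + a \<bullet> e = -1"
    unfolding a_def \<beta>_def using e by (simp add: inner_diff_left)
  have shear: "scales lborel (\<lambda>u. u + (u \<bullet> a) *\<^sub>R e) 1"
    using scales_lborel_shear[OF e, of a] unfolding ae by simp
  have "\<beta> \<bullet> e = 0"
    unfolding \<beta>_def using e by (simp add: inner_diff_left)
  then have "scales lborel (\<lambda>u. u + (u \<bullet> e) *\<^sub>R (c *\<^sub>R \<beta>)) 1" for c
    by (intro scales_lborel_shear_orthogonal[OF e]) simp
  from scales_comp[OF scales_comp[OF this shear] this, unfolded a_def] show ?thesis
    by (rule scales_cong) (simp_all only: reflect_eq_shears[OF n e refl \<alpha> \<beta>_def] mult_1)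
qed

section \<open>The surface measure and the collision measure\<close>

lemma measurable_normalize_sphere:
  "(\<lambda>y::'a::euclidean_space. y /\<^sub>R norm y)
     \<in> measurable (restrict_space lborel (cball 0 1 - {0})) (restrict_space borel (sphere 0 1))"
proof (rule measurable_restrict_space2)
  show "(\<lambda>y::'a. y /\<^sub>R norm y) \<in> space (restrict_space lborel (cball 0 1 - {0})) \<rightarrow> sphere 0 1"
    by (auto simp: space_restrict_space)
qed (intro measurable_restrict_space1, measurable)

lemma space_sphere_measure [simp]: "space (sphere_measure :: 'a::euclidean_space measure) = sphere 0 1"
  by (simp add: sphere_measure_def space_scale_measure space_restrict_space)

lemma sets_sphere_measure [simp, measurable_cong]:
  "sets (sphere_measure :: 'a::euclidean_space measure) = sets (restrict_space borel (sphere 0 1))"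
  by (simp add: sphere_measure_def)

lemma measurable_sphere_measure_id [measurable]:
  "(\<lambda>x. x) \<in> measurable (sphere_measure :: 'a::euclidean_space measure) borel"
  by (simp cong: measurable_cong_sets add: measurable_restrict_space1)

lemma nn_integral_sphere_measure:
  fixes g :: "'a::euclidean_space \<Rightarrow> ennreal"
  assumes g: "g \<in> borel_measurable sphere_measure"
  shows "(\<integral>\<^sup>+x. g x \<partial>sphere_measure)
    = of_nat DIM('a) * (\<integral>\<^sup>+y. g (y /\<^sub>R norm y) * indicator (cball 0 1 - {0}) y \<partial>lborel)"
proof -
  have g': "g \<in> borel_measurable (restrict_space borel (sphere (0::'a) 1))"
    using g by (simp cong: measurable_cong_sets)
  have "(\<integral>\<^sup>+x. g x \<partial>sphere_measure) = of_nat DIM('a) *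
     (\<integral>\<^sup>+x. g x \<partial>distr (restrict_space lborel (cball 0 1 - {0})) (restrict_space borel (sphere 0 1))
                  (\<lambda>y. y /\<^sub>R norm y))"
    unfolding sphere_measure_def by (rule nn_integral_scale_measure) (simp add: g' cong: measurable_cong_sets)
  also have "\<dots> = of_nat DIM('a) * (\<integral>\<^sup>+y. g (y /\<^sub>R norm y) \<partial>restrict_space lborel (cball 0 1 - {0}))"
    by (subst nn_integral_distr[OF measurable_normalize_sphere]) (simp_all add: g')
  also have "\<dots> = of_nat DIM('a) * (\<integral>\<^sup>+y. g (y /\<^sub>R norm y) * indicator (cball 0 1 - {0}) y \<partial>lborel)"
    by (subst nn_integral_restrict_space) simp_all
  finally show ?thesis .
qed

lemma finite_measure_sphere_measure: "finite_measure (sphere_measure :: 'a::euclidean_space measure)"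
proof (rule finite_measureI)
  have "emeasure (sphere_measure :: 'a measure) (space (sphere_measure :: 'a measure))
      = (\<integral>\<^sup>+x. 1 \<partial>(sphere_measure :: 'a measure))"
    by simp
  also have "\<dots> = of_nat DIM('a) * emeasure lborel (cball (0::'a) 1 - {0})"
    by (subst nn_integral_sphere_measure) auto
  also have "\<dots> \<le> of_nat DIM('a) * emeasure lborel (cball (0::'a) 1)"
    by (intro mult_left_mono emeasure_mono) auto
  also have "\<dots> < \<infinity>"
    using emeasure_lborel_cball_finite[of "0::'a" 1] by (simp add: ennreal_mult_less_top of_nat_less_top)
  finally show "emeasure (sphere_measure :: 'a measure) (space (sphere_measure :: 'a measure)) \<noteq> \<infinity>"
    by simp
qed

lemma sigma_finite_sphere_measure: "sigma_finite_measure (sphere_measure :: 'a::euclidean_space measure)"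
proof -
  interpret finite_measure "sphere_measure :: 'a measure"
    by (rule finite_measure_sphere_measure)
  show ?thesis ..
qed

lemma scales_sphere_measure_uminus: "scales (sphere_measure :: 'a::euclidean_space measure) uminus 1"
proof (rule scalesI)
  have "(uminus :: 'a \<Rightarrow> 'a) \<in> measurable (restrict_space borel (sphere 0 1)) (restrict_space borel (sphere 0 1))"
    by (rule measurable_restrict_space3) auto
  then show uminus_meas: "(uminus :: 'a \<Rightarrow> 'a) \<in> measurable sphere_measure sphere_measure"
    by (simp cong: measurable_cong_sets)
  fix g :: "'a \<Rightarrow> ennreal" assume g: "g \<in> borel_measurable sphere_measure"
  define D where "D = cball (0::'a) 1 - {0}"
  define G where "G y = g (y /\<^sub>R norm y) * indicator D y" for y
  have "g \<in> borel_measurable (restrict_space borel (sphere (0::'a) 1))"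
    using g by (simp cong: measurable_cong_sets)
  then have "(\<lambda>y. g (y /\<^sub>R norm y)) \<in> borel_measurable (restrict_space lborel D)"
    unfolding D_def using measurable_normalize_sphere by (rule measurable_compose[rotated])
  then have G_meas: "G \<in> borel_measurable borel"
    unfolding G_def D_def by (subst (asm) borel_measurable_restrict_space_iff_ennreal) auto
  have "(\<integral>\<^sup>+x. g (- x) \<partial>sphere_measure) = of_nat DIM('a) * (\<integral>\<^sup>+y. G (- y) \<partial>lborel)"
    using measurable_compose[OF uminus_meas g]
    by (simp add: nn_integral_sphere_measure G_def D_def indicator_def)
  also have "(\<integral>\<^sup>+y. G (- y) \<partial>lborel) = (\<integral>\<^sup>+y. G y \<partial>lborel)"
    using scales_nn_integral[OF scales_lborel_uminus, of G] G_meas by simp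
  also have "of_nat DIM('a) * (\<integral>\<^sup>+y. G y \<partial>lborel) = (\<integral>\<^sup>+x. g x \<partial>sphere_measure)"
    unfolding G_def D_def by (rule nn_integral_sphere_measure[OF g, symmetric])
  finally show "(\<integral>\<^sup>+x. g (- x) \<partial>sphere_measure) = 1 * (\<integral>\<^sup>+x. g x \<partial>sphere_measure)"
    by simp
qed

abbreviation coll_measure :: "('a::euclidean_space \<times> 'a \<times> 'a) measure" where
  "coll_measure \<equiv> lborel \<Otimes>\<^sub>M lborel \<Otimes>\<^sub>M sphere_measure"

lemma sigma_finite_lborel_sphere_measure:
  "sigma_finite_measure (lborel \<Otimes>\<^sub>M (sphere_measure :: 'a::euclidean_space measure))"
  by (intro sigma_finite_pair_measure sigma_finite_lborel sigma_finite_sphere_measure)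

lemma norm_in_space_coll_measure: "(v, v1, \<Omega>) \<in> space coll_measure \<Longrightarrow> norm \<Omega> = 1"
  by (simp add: space_pair_measure)

lemma scales_coll_measure_v1:
  fixes T :: "'a::euclidean_space \<Rightarrow> 'a \<Rightarrow> 'a \<Rightarrow> 'a"
  assumes meas: "(\<lambda>(v, v1, \<Omega>). T v \<Omega> v1) \<in> borel_measurable coll_measure"
    and scales_T: "\<And>v \<Omega>. norm \<Omega> = 1 \<Longrightarrow> scales lborel (T v \<Omega>) c"
  shows "scales coll_measure (\<lambda>(v, v1, \<Omega>). (v, T v \<Omega> v1, \<Omega>)) c"
proof -
  have "(\<lambda>y. T v (snd y) (fst y)) \<in> borel_measurable (lborel \<Otimes>\<^sub>M sphere_measure)" for v
    using measurable_Pair2[OF meas, of v] by (simp add: case_prod_beta')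
  then have "scales (lborel \<Otimes>\<^sub>M sphere_measure) (\<lambda>y. (T v (snd y) (fst y), snd y)) c" for v
    using scales_T by (intro scales_pair_measure_fst[OF sigma_finite_lborel sigma_finite_sphere_measure]) auto
  then have "scales coll_measure (\<lambda>z. (fst z, (\<lambda>y. (T (fst z) (snd y) (fst y), snd y)) (snd z))) c"
    using meas
    by (intro scales_pair_measure_snd[OF sigma_finite_lborel_sphere_measure])
       (auto intro!: measurable_Pair simp: case_prod_beta')
  then show ?thesis
    by (rule scales_cong) auto
qed

lemma scales_coll_measure_v:
  fixes T :: "'a::euclidean_space \<Rightarrow> 'a \<Rightarrow> 'a \<Rightarrow> 'a"
  assumes meas: "(\<lambda>(v, v1, \<Omega>). T v1 \<Omega> v) \<in> borel_measurable coll_measure"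
    and scales_T: "\<And>v1 \<Omega>. scales lborel (T v1 \<Omega>) c"
  shows "scales coll_measure (\<lambda>(v, v1, \<Omega>). (T v1 \<Omega> v, v1, \<Omega>)) c"
proof -
  have "scales coll_measure (\<lambda>z. (T (fst (snd z)) (snd (snd z)) (fst z), snd z)) c"
    using meas scales_T
    by (intro scales_pair_measure_fst[OF sigma_finite_lborel sigma_finite_lborel_sphere_measure])
       (auto simp: case_prod_beta')
  then show ?thesis
    by (rule scales_cong) auto
qed

lemma scales_coll_measure_uminus:
  "scales (coll_measure :: ('a::euclidean_space \<times> 'a \<times> 'a) measure) (\<lambda>(v, v1, \<Omega>). (v, v1, - \<Omega>)) 1"
proof -
  have uminus_snd: "scales (lborel \<Otimes>\<^sub>M (sphere_measure :: 'a measure)) (\<lambda>y. (fst y, - snd y)) 1"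
    using scales_sphere_measure_uminus
      measurable_compose[OF measurable_snd scales_measurable[OF scales_sphere_measure_uminus]]
    by (intro scales_pair_measure_snd[OF sigma_finite_sphere_measure, where T="\<lambda>_. uminus"]) auto
  have "scales (coll_measure :: ('a \<times> 'a \<times> 'a) measure) (\<lambda>z. (fst z, (\<lambda>y. (fst y, - snd y)) (snd z))) 1"
    using uminus_snd measurable_compose[OF measurable_snd scales_measurable[OF uminus_snd]]
    by (intro scales_pair_measure_snd[OF sigma_finite_lborel_sphere_measure]) auto
  then show ?thesis
    by (rule scales_cong) auto
qed

lemma scales_coll_measure_swap:
  "scales (coll_measure :: ('a::euclidean_space \<times> 'a \<times> 'a) measure) (\<lambda>(v, v1, \<Omega>). (v1, v, - \<Omega>)) 1"
proof -
  have add_v1: "scales (coll_measure :: ('a \<times> 'a \<times> 'a) measure) (\<lambda>(v, v1, \<Omega>). (v + v1, v1, \<Omega>)) 1"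
    by (rule scales_coll_measure_v) (simp_all add: scales_lborel_translation)
  have diff_v: "scales (coll_measure :: ('a \<times> 'a \<times> 'a) measure) (\<lambda>(v, v1, \<Omega>). (v, v1 - v, \<Omega>)) 1"
    by (rule scales_coll_measure_v1) (simp_all add: scales_lborel_diff)
  have minus_v1: "scales (coll_measure :: ('a \<times> 'a \<times> 'a) measure) (\<lambda>(v, v1, \<Omega>). (v, - v1, \<Omega>)) 1"
    by (rule scales_coll_measure_v1) (simp_all add: scales_lborel_uminus)
  from scales_comp[OF scales_comp[OF scales_comp[OF scales_comp[OF add_v1 diff_v] add_v1] minus_v1]
      scales_coll_measure_uminus]
  show ?thesis
    by (rule scales_cong) auto
qed

section \<open>The collision map\<close>

definition cmass :: "nat \<Rightarrow> nat \<Rightarrow> 'a \<Rightarrow> 'a \<Rightarrow> 'a::real_vector" where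
  "cmass p q v v1 = (1 / real (p + q)) *\<^sub>R (real p *\<^sub>R v + real q *\<^sub>R v1)"

text \<open>The factor by which a collision turning masses \<open>p, q\<close> into \<open>r, p + q - r\<close> stretches the
  relative velocity.\<close>

definition coll_ratio :: "nat \<Rightarrow> nat \<Rightarrow> nat \<Rightarrow> real" where
  "coll_ratio p q r = sqrt (real p * real q / (real r * real (p + q - r)))"

lemma coll_ratio_pos: "1 \<le> p \<Longrightarrow> 1 \<le> q \<Longrightarrow> 1 \<le> r \<Longrightarrow> r < p + q \<Longrightarrow> 0 < coll_ratio p q r"
  by (simp add: coll_ratio_def)

lemma powr_eq_coll_ratio_power:
  assumes "1 \<le> p" "1 \<le> q" "1 \<le> m" "m < p + q"
  shows "(real m * real (p + q - m) / (real p * real q)) powr (real n / 2) = coll_ratio m (p + q - m) p ^ n"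
proof -
  define X where "X = real m * real (p + q - m) / (real p * real q)"
  have "m + (p + q - m) - p = q" and X: "0 < X"
    using assms by (auto simp: X_def)
  then have "coll_ratio m (p + q - m) p = X powr (1 / 2)"
    unfolding coll_ratio_def X_def by (simp add: powr_half_sqrt)
  then show ?thesis
    using X unfolding X_def[symmetric] by (simp add: powr_power)
qed

lemma
  fixes v v1 \<Omega> :: "'a::euclidean_space"
  assumes "1 \<le> p" "1 \<le> q" "1 \<le> r" "r < p + q"
  shows coll_v_eq: "coll_v p q r v v1 \<Omega>
      = cmass p q v v1 + (real (p + q - r) / real (p + q) * coll_ratio p q r) *\<^sub>R reflect \<Omega> (v - v1)"
    and coll_v1_eq: "coll_v1 p q r v v1 \<Omega>
      = cmass p q v v1 - (real r / real (p + q) * coll_ratio p q r) *\<^sub>R reflect \<Omega> (v - v1)"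
proof -
  define s where "s = real (p + q - r)"
  define X where "X = real p * real q / (real r * s)"
  have pos: "0 < s" "0 < real r" "0 < real p * real q" "0 < X"
    using assms by (auto simp: s_def X_def)
  have sq: "s\<^sup>2 * X = real p * real q * (s / real r)" "(real r)\<^sup>2 * X = real p * real q * (real r / s)"
    using pos by (simp_all add: X_def power2_eq_square)
  have "s * sqrt X = sqrt (s\<^sup>2 * X)" "real r * sqrt X = sqrt ((real r)\<^sup>2 * X)"
    using pos by (simp_all add: real_sqrt_mult)
  then have "s * sqrt X = sqrt (real p * real q) * sqrt (s / real r)"
    and "real r * sqrt X = sqrt (real p * real q) * sqrt (real r / s)"
    unfolding sq by (simp_all only: real_sqrt_mult)
  moreover have "coll_ratio p q r = sqrt X"
    unfolding coll_ratio_def X_def s_def ..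
  ultimately show "coll_v p q r v v1 \<Omega>
      = cmass p q v v1 + (real (p + q - r) / real (p + q) * coll_ratio p q r) *\<^sub>R reflect \<Omega> (v - v1)"
    and "coll_v1 p q r v v1 \<Omega>
      = cmass p q v v1 - (real r / real (p + q) * coll_ratio p q r) *\<^sub>R reflect \<Omega> (v - v1)"
    unfolding coll_v_def coll_v1_def cmass_def reflect_def s_def[symmetric] by simp_all
qed

lemma coll_v_diff_coll_v1:
  fixes v v1 \<Omega> :: "'a::euclidean_space"
  assumes "1 \<le> p" "1 \<le> q" "1 \<le> r" "r < p + q"
  shows "coll_v p q r v v1 \<Omega> - coll_v1 p q r v v1 \<Omega> = coll_ratio p q r *\<^sub>R reflect \<Omega> (v - v1)"
proof -
  have "real (p + q - r) / real (p + q) * coll_ratio p q r + real r / real (p + q) * coll_ratio p q r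
      = (real (p + q - r) + real r) / real (p + q) * coll_ratio p q r"
    by (simp add: add_divide_distrib ring_distribs)
  also have "\<dots> = coll_ratio p q r"
    using assms by (simp add: of_nat_diff)
  finally show ?thesis
    unfolding coll_v_eq[OF assms] coll_v1_eq[OF assms] by (simp add: scaleR_add_left[symmetric])
qed

lemma cmass_coll:
  fixes v v1 \<Omega> :: "'a::euclidean_space"
  assumes "1 \<le> p" "1 \<le> q" "1 \<le> r" "r < p + q"
  shows "cmass r (p + q - r) (coll_v p q r v v1 \<Omega>) (coll_v1 p q r v v1 \<Omega>) = cmass p q v v1"
proof -
  have "real r + real (p + q - r) = real (p + q)" "real (p + q) > 0"
    using assms by auto
  then show ?thesis
    unfolding coll_v_eq[OF assms] coll_v1_eq[OF assms] cmass_def[of r]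
    by (simp add: algebra_simps scaleR_add_left[symmetric] del: scaleR_add_left)
qed

lemma coll_ratio_reverse:
  assumes "1 \<le> p" "1 \<le> q" "1 \<le> r" "r < p + q"
  shows "coll_ratio r (p + q - r) p * coll_ratio p q r = 1"
proof -
  define a where "a = real r * real (p + q - r)"
  define b where "b = real p * real q"
  have "a > 0" "b > 0"
    using assms by (auto simp: a_def b_def)
  moreover have "r + (p + q - r) - p = q"
    using assms by auto
  then have "coll_ratio r (p + q - r) p * coll_ratio p q r = sqrt (a / b * (b / a))"
    unfolding coll_ratio_def a_def b_def real_sqrt_mult by simp
  ultimately show ?thesis
    by simp
qed

lemma coll_v_reverse:
  fixes v v1 \<Omega> :: "'a::euclidean_space"
  assumes valid: "1 \<le> p" "1 \<le> q" "1 \<le> r" "r < p + q" and n: "norm \<Omega> = 1"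
  shows "coll_v r (p + q - r) p (coll_v p q r v v1 \<Omega>) (coll_v1 p q r v v1 \<Omega>) (- \<Omega>) = v"
proof -
  have valid': "1 \<le> r" "1 \<le> p + q - r" "1 \<le> p" "p < r + (p + q - r)"
    and masses: "r + (p + q - r) = p + q" "r + (p + q - r) - p = q"
    using valid by auto
  have reflect_diff:
    "reflect (- \<Omega>) (coll_v p q r v v1 \<Omega> - coll_v1 p q r v v1 \<Omega>) = coll_ratio p q r *\<^sub>R (v - v1)"
    unfolding coll_v_diff_coll_v1[OF valid] by (simp add: reflect_scaleR reflect_reflect[OF n])
  have M: "real (p + q) > 0"
    using valid by simp
  have "coll_v r (p + q - r) p (coll_v p q r v v1 \<Omega>) (coll_v1 p q r v v1 \<Omega>) (- \<Omega>)
      = cmass p q v v1 + (real q / real (p + q)) *\<^sub>R (v - v1)"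
    using coll_ratio_reverse[OF valid]
    unfolding coll_v_eq[OF valid', of _ _ "- \<Omega>"] masses reflect_diff cmass_coll[OF valid]
    by (simp add: mult.assoc)
  also have "real (p + q) *\<^sub>R \<dots> = real (p + q) *\<^sub>R v"
  proof -
    have "real (p + q) *\<^sub>R cmass p q v v1 = real p *\<^sub>R v + real q *\<^sub>R v1"
      unfolding cmass_def using M by simp
    moreover have "real (p + q) * (real q / real (p + q)) = real q"
      using M by simp
    ultimately show ?thesis
      by (simp add: scaleR_add_right algebra_simps)
  qed
  finally show ?thesis
    using M by simp
qed

lemma inner_coll_v_diff_coll_v1:
  fixes v v1 \<Omega> :: "'a::euclidean_space"
  assumes valid: "1 \<le> p" "1 \<le> q" "1 \<le> r" "r < p + q" and n: "norm \<Omega> = 1"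
  shows "(coll_v p q r v v1 \<Omega> - coll_v1 p q r v v1 \<Omega>) \<bullet> (- \<Omega>) = coll_ratio p q r * ((v - v1) \<bullet> \<Omega>)"
  unfolding coll_v_diff_coll_v1[OF valid] using inner_reflect[OF n, of "v - v1"] by simp

lemma cross_B_coll:
  fixes v v1 \<Omega> :: "'a::euclidean_space"
  assumes valid: "1 \<le> p" "1 \<le> q" "1 \<le> r" "r < p + q" and n: "norm \<Omega> = 1"
  shows "cross_B B r (p + q - r) (coll_v p q r v v1 \<Omega>) (coll_v1 p q r v v1 \<Omega>) (- \<Omega>) = cross_B B p q v v1 \<Omega>"
proof -
  define k where "k = coll_ratio p q r"
  define u where "u = v - v1"
  have k: "k > 0"
    unfolding k_def by (rule coll_ratio_pos[OF valid])
  have "real r * real (p + q - r) * k\<^sup>2 = real p * real q"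
    using valid unfolding k_def coll_ratio_def by simp
  then have energy: "real r * real (p + q - r) / real (p + q) * (k * norm u)\<^sup>2
      = real p * real q / real (p + q) * (norm u)\<^sup>2"
    by (simp add: power_mult_distrib)
  have "(k *\<^sub>R reflect \<Omega> u) /\<^sub>R (k * norm u) = (1 / norm u) *\<^sub>R reflect \<Omega> u"
    using k by (cases "u = 0") (simp_all add: field_simps)
  then have angle: "(- \<Omega>) \<bullet> ((k *\<^sub>R reflect \<Omega> u) /\<^sub>R (k * norm u)) = \<Omega> \<bullet> (u /\<^sub>R norm u)"
    using inner_reflect[OF n, of u] k by (simp add: inner_commute)
  have masses: "r + (p + q - r) = p + q"
    using valid by auto
  have norm_diff: "norm (k *\<^sub>R reflect \<Omega> u) = k * norm u"
    using k norm_reflect[OF n] by simp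
  show ?thesis
    unfolding cross_B_def coll_v_diff_coll_v1[OF valid] k_def[symmetric] u_def[symmetric]
      masses norm_diff energy angle ..
qed

definition coll_map :: "nat \<Rightarrow> nat \<Rightarrow> nat \<Rightarrow> 'a \<times> 'a \<times> 'a \<Rightarrow> 'a \<times> 'a \<times> 'a::euclidean_space" where
  "coll_map p q r = (\<lambda>(v, v1, \<Omega>). (coll_v p q r v v1 \<Omega>, coll_v1 p q r v v1 \<Omega>, - \<Omega>))"

lemma scales_coll_measure_relative:
  "scales (coll_measure :: ('a::euclidean_space \<times> 'a \<times> 'a) measure) (\<lambda>(v, v1, \<Omega>). (v, v - v1, \<Omega>)) 1"
proof (rule scales_coll_measure_v1)
  fix v \<Omega> :: 'a
  show "scales lborel (\<lambda>v1. v - v1) 1"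
    by (rule scales_cong[OF scales_lborel_affine[of "-1" v]]) auto
qed simp

lemma scales_coll_measure_shift:
  "scales (coll_measure :: ('a::euclidean_space \<times> 'a \<times> 'a) measure) (\<lambda>(v, v1, \<Omega>). (v + a *\<^sub>R v1, v1, \<Omega>)) 1"
  by (rule scales_coll_measure_v) (simp_all add: scales_lborel_translation)

lemma scales_coll_measure_stretch:
  assumes k: "0 < k"
  shows "scales (coll_measure :: ('a::euclidean_space \<times> 'a \<times> 'a) measure)
    (\<lambda>(v, v1, \<Omega>). (v, k *\<^sub>R reflect \<Omega> v1, \<Omega>)) (ennreal (1 / k ^ DIM('a)))"
proof (rule scales_coll_measure_v1)
  fix v \<Omega> :: 'a assume "norm \<Omega> = 1"
  then have "scales lborel (\<lambda>x. 0 + k *\<^sub>R reflect \<Omega> x) (1 * ennreal (1 / \<bar>k\<bar> ^ DIM('a)))"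
    using k by (intro scales_comp scales_lborel_reflect scales_lborel_affine) simp_all
  then show "scales lborel (\<lambda>v1. k *\<^sub>R reflect \<Omega> v1) (ennreal (1 / k ^ DIM('a)))"
    by (rule scales_cong) (use k in simp_all)
qed (simp add: reflect_def)

text \<open>The collision map factors as \<open>(v, v1) \<mapsto> (cmass, v - v1) \<mapsto> (cmass, k reflect \<Omega> (v - v1)) \<mapsto> (v', v1')\<close>,
  where only the middle step, with \<open>k = coll_ratio p q r\<close>, changes volume.\<close>

lemma scales_coll_map:
  assumes valid: "1 \<le> p" "1 \<le> q" "1 \<le> r" "r < p + q"
  shows "scales coll_measure (coll_map p q r :: 'a::euclidean_space \<times> 'a \<times> 'a \<Rightarrow> _)
    (ennreal (1 / coll_ratio p q r ^ DIM('a)))"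
proof -
  define k where "k = coll_ratio p q r"
  define a1 where "a1 = - (real q / real (p + q))"
  define a2 where "a2 = real (p + q - r) / real (p + q)"
  have k: "k > 0"
    unfolding k_def by (rule coll_ratio_pos[OF valid])
  note composite = scales_comp[OF scales_comp[OF scales_comp[OF scales_comp[OF scales_comp[OF
      scales_coll_measure_relative scales_coll_measure_shift[of a1]] scales_coll_measure_stretch[OF k]]
      scales_coll_measure_shift[of a2]] scales_coll_measure_relative] scales_coll_measure_uminus]
  have "real p / real (p + q) + real q / real (p + q) = 1"
    using valid by (simp add: add_divide_distrib[symmetric])
  then have cm: "v + a1 *\<^sub>R (v - v1) = cmass p q v v1" for v v1 :: 'a
    unfolding a1_def cmass_def
    by (simp add: algebra_simps scaleR_add_left[symmetric] del: scaleR_add_left of_nat_add)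
  have v': "cmass p q v v1 + (a2 * k) *\<^sub>R reflect \<Omega> (v - v1) = coll_v p q r v v1 \<Omega>" for v v1 \<Omega> :: 'a
    unfolding coll_v_eq[OF valid] a2_def k_def by simp
  have v1': "coll_v p q r v v1 \<Omega> - k *\<^sub>R reflect \<Omega> (v - v1) = coll_v1 p q r v v1 \<Omega>" for v v1 \<Omega> :: 'a
    unfolding k_def coll_v_diff_coll_v1[OF valid, symmetric] by simp
  show ?thesis
    by (intro scales_cong[OF composite]) (auto simp: coll_map_def cm v' v1' k_def[symmetric])
qed

lemma
  fixes F :: "'a::euclidean_space \<times> 'a \<times> 'a \<Rightarrow> real"
  assumes valid: "1 \<le> p" "1 \<le> q" "1 \<le> r" "r < p + q" and F: "F \<in> borel_measurable coll_measure"
  shows integral_coll_map: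
      "(\<integral>z. coll_ratio p q r ^ DIM('a) * F (coll_map p q r z) \<partial>coll_measure) = (\<integral>z. F z \<partial>coll_measure)"
    and nn_integral_coll_map:
      "(\<integral>\<^sup>+z. ennreal (coll_ratio p q r ^ DIM('a) * \<bar>F (coll_map p q r z)\<bar>) \<partial>coll_measure)
         = (\<integral>\<^sup>+z. ennreal \<bar>F z\<bar> \<partial>coll_measure)"
proof -
  have k: "0 < coll_ratio p q r ^ DIM('a)"
    using coll_ratio_pos[OF valid] by simp
  note scales = scales_coll_map[OF valid, where 'a='a]
  show "(\<integral>z. coll_ratio p q r ^ DIM('a) * F (coll_map p q r z) \<partial>coll_measure) = (\<integral>z. F z \<partial>coll_measure)"
    using scales_integral[OF scales _ F] k coll_ratio_pos[OF valid] by simp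
  have "(\<integral>\<^sup>+z. ennreal (coll_ratio p q r ^ DIM('a) * \<bar>F (coll_map p q r z)\<bar>) \<partial>coll_measure)
      = ennreal (coll_ratio p q r ^ DIM('a)) * (\<integral>\<^sup>+z. ennreal \<bar>F (coll_map p q r z)\<bar> \<partial>coll_measure)"
    using k measurable_compose[OF scales_measurable[OF scales] F]
    by (simp add: ennreal_mult nn_integral_cmult)
  also have "\<dots> = (\<integral>\<^sup>+z. ennreal \<bar>F z\<bar> \<partial>coll_measure)"
    using scales_nn_integral[OF scales, of "\<lambda>z. ennreal \<bar>F z\<bar>"] F k coll_ratio_pos[OF valid]
    by (simp add: mult.assoc[symmetric] ennreal_mult[symmetric])
  finally show "(\<integral>\<^sup>+z. ennreal (coll_ratio p q r ^ DIM('a) * \<bar>F (coll_map p q r z)\<bar>) \<partial>coll_measure)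
      = (\<integral>\<^sup>+z. ennreal \<bar>F z\<bar> \<partial>coll_measure)" .
qed

lemma measurable_coll_v [measurable]:
  "(\<lambda>z. coll_v p q r (fst z) (fst (snd z)) (snd (snd z))) \<in> borel_measurable (coll_measure :: ('a::euclidean_space \<times> _) measure)"
  unfolding coll_v_def by measurable

lemma measurable_coll_v1 [measurable]:
  "(\<lambda>z. coll_v1 p q r (fst z) (fst (snd z)) (snd (snd z))) \<in> borel_measurable (coll_measure :: ('a::euclidean_space \<times> _) measure)"
  unfolding coll_v1_def by measurable

lemma coll_v_swap:
  assumes "m' < m + m1"
  shows "coll_v m1 m (m + m1 - m') v1 v (- \<Omega>) = coll_v1 m m1 m' v v1 \<Omega>"
proof -
  have masses: "m1 + m - (m + m1 - m') = m'" "m + m1 - (m + m1 - m') = m'" "m1 + m = m + m1"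
    using assms by auto
  have "v1 - v - (2 * ((v1 - v) \<bullet> - \<Omega>)) *\<^sub>R - \<Omega> = - (v - v1 - (2 * ((v - v1) \<bullet> \<Omega>)) *\<^sub>R \<Omega>)"
    by (simp add: algebra_simps inner_diff_left)
  then show ?thesis
    unfolding coll_v_def coll_v1_def masses by (simp add: algebra_simps mult.commute)
qed

section \<open>Cross section and collision kernel\<close>

lemma cross_B_nonneg:
  assumes B_nonneg: "\<forall>E c. 0 \<le> E \<longrightarrow> -1 \<le> c \<longrightarrow> c \<le> 1 \<longrightarrow> 0 \<le> B E c" and n: "norm \<Omega> = 1"
  shows "0 \<le> cross_B B m m1 v v1 \<Omega>"
proof -
  have "\<bar>\<Omega> \<bullet> ((v - v1) /\<^sub>R norm (v - v1))\<bar> \<le> norm \<Omega> * norm ((v - v1) /\<^sub>R norm (v - v1))"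
    by (rule Cauchy_Schwarz_ineq2)
  also have "norm ((v - v1) /\<^sub>R norm (v - v1)) \<le> 1"
    by (cases "v = v1") auto
  finally have "\<bar>\<Omega> \<bullet> ((v - v1) /\<^sub>R norm (v - v1))\<bar> \<le> 1"
    using n by simp
  then show ?thesis
    unfolding cross_B_def using B_nonneg by auto
qed

lemma cross_B_swap: "cross_B B m1 m v1 v (- \<Omega>) = cross_B B m m1 v v1 \<Omega>"
  unfolding cross_B_def norm_minus_commute[of v1] by (simp add: add.commute mult.commute inner_diff_right)

lemma measurable_cross_B [measurable]:
  assumes B_meas: "(\<lambda>(E, c). B E c) \<in> borel_measurable (restrict_space borel ({0..} \<times> {-1..1}))"
  shows "(\<lambda>z. cross_B B m m1 (fst z) (fst (snd z)) (snd (snd z)))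
    \<in> borel_measurable (coll_measure :: ('a::euclidean_space \<times> _) measure)"
proof -
  define E where "E = (\<lambda>(v::'a, v1, \<Omega>::'a). real m * real m1 / real (m + m1) * (norm (v - v1))\<^sup>2)"
  define c where "c = (\<lambda>(v::'a, v1, \<Omega>::'a). \<Omega> \<bullet> ((v - v1) /\<^sub>R norm (v - v1)))"
  have "(\<lambda>z. (E z, c z)) \<in> measurable coll_measure (borel \<Otimes>\<^sub>M borel)"
    unfolding E_def c_def by measurable
  then have "(\<lambda>z. (E z, c z)) \<in> measurable coll_measure borel"
    by (simp add: borel_prod)
  moreover have "(E z, c z) \<in> {0..} \<times> {-1..1}" if "z \<in> space coll_measure" for z
  proof -
    obtain v v1 \<Omega> where z: "z = (v, v1, \<Omega>)"
      by (cases z) auto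
    have "\<bar>\<Omega> \<bullet> ((v - v1) /\<^sub>R norm (v - v1))\<bar> \<le> norm \<Omega> * norm ((v - v1) /\<^sub>R norm (v - v1))"
      by (rule Cauchy_Schwarz_ineq2)
    also have "\<dots> \<le> 1"
      using that norm_in_space_coll_measure[of v v1 \<Omega>] unfolding z by (cases "v = v1") auto
    finally show ?thesis
      unfolding z E_def c_def by auto
  qed
  ultimately have "(\<lambda>z. (E z, c z)) \<in> measurable coll_measure (restrict_space borel ({0..} \<times> {-1..1}))"
    by (intro measurable_restrict_space2) auto
  from measurable_compose[OF this B_meas] show ?thesis
    unfolding cross_B_def E_def c_def by (simp add: case_prod_beta')
qed

lemma measurable_indicator_precoll [measurable]:
  "(\<lambda>z. indicator precoll z :: real) \<in> borel_measurable (coll_measure :: ('a::euclidean_space \<times> _) measure)"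
proof -
  have "{z \<in> space (coll_measure :: ('a \<times> 'a \<times> 'a) measure). (fst z - fst (snd z)) \<bullet> snd (snd z) \<le> 0} \<in> sets coll_measure"
    by measurable
  moreover have "{z \<in> space (coll_measure :: ('a \<times> 'a \<times> 'a) measure). (fst z - fst (snd z)) \<bullet> snd (snd z) \<le> 0}
      = {z \<in> space coll_measure. z \<in> precoll}"
    unfolding precoll_def by auto
  ultimately show ?thesis
    using borel_measurable_indicator'[of coll_measure "\<lambda>z. z" "\<lambda>_. precoll"] by simp
qed

lemma indicator_precoll_section:
  "indicator {(v1, \<Omega>). (v - v1) \<bullet> \<Omega> \<le> 0} y = (indicator precoll (v, y) :: real)"
  unfolding precoll_def by (cases y) (simp add: indicator_def)

lemma coll_map_in_precoll:
  fixes v v1 \<Omega> :: "'a::euclidean_space"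
  assumes valid: "1 \<le> p" "1 \<le> q" "1 \<le> r" "r < p + q" and n: "norm \<Omega> = 1"
  shows "coll_map p q r (v, v1, \<Omega>) \<in> precoll \<longleftrightarrow> (v, v1, \<Omega>) \<in> precoll"
  using inner_coll_v_diff_coll_v1[OF valid n, of v v1] coll_ratio_pos[OF valid]
  by (simp add: coll_map_def precoll_def mult_le_0_iff)

definition coll_kernel ::
  "(real \<Rightarrow> real \<Rightarrow> real) \<Rightarrow> (nat \<Rightarrow> 'a::euclidean_space \<Rightarrow> real) \<Rightarrow> nat \<Rightarrow> nat \<Rightarrow> 'a \<times> 'a \<times> 'a \<Rightarrow> real"
where
  "coll_kernel B f m m1 =
     (\<lambda>(v, v1, \<Omega>). indicator precoll (v, v1, \<Omega>) * cross_B B m m1 v v1 \<Omega> * f m v * f m1 v1)"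

lemma coll_kernel_swap: "coll_kernel B f m1 m (v1, v, - \<Omega>) = coll_kernel B f m m1 (v, v1, \<Omega>)"
proof -
  have "indicator precoll (v1, v, - \<Omega>) = (indicator precoll (v, v1, \<Omega>) :: real)"
    unfolding precoll_def by (simp add: indicator_def inner_diff_left)
  then show ?thesis
    unfolding coll_kernel_def by (simp add: cross_B_swap)
qed

lemma coll_kernel_coll_map:
  fixes v v1 \<Omega> :: "'a::euclidean_space"
  assumes valid: "1 \<le> p" "1 \<le> q" "1 \<le> r" "r < p + q" and n: "norm \<Omega> = 1"
  shows "coll_kernel B f r (p + q - r) (coll_map p q r (v, v1, \<Omega>))
    = indicator precoll (v, v1, \<Omega>) * cross_B B p q v v1 \<Omega>
        * f r (coll_v p q r v v1 \<Omega>) * f (p + q - r) (coll_v1 p q r v v1 \<Omega>)"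
  using coll_map_in_precoll[OF valid n, of v v1] cross_B_coll[OF valid n, of B v v1]
  by (simp add: coll_kernel_def coll_map_def indicator_def)

lemma measurable_coll_kernel [measurable]:
  assumes "(\<lambda>(E, c). B E c) \<in> borel_measurable (restrict_space borel ({0..} \<times> {-1..1}))"
    and [measurable]: "\<And>m. f m \<in> borel_measurable borel"
  shows "coll_kernel B f m m1 \<in> borel_measurable coll_measure"
proof -
  note measurable_cross_B[OF assms(1), of m m1, measurable]
  have "coll_kernel B f m m1
      = (\<lambda>z. indicator precoll z * cross_B B m m1 (fst z) (fst (snd z)) (snd (snd z)) * f m (fst z) * f m1 (fst (snd z)))"
    by (auto simp: coll_kernel_def)
  then show ?thesis
    by simp
qed

section \<open>Index sets of mass triples\<close>

definition coll_indices :: "((nat \<times> nat) \<times> nat) set" where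
  "coll_indices = Sigma ({1..} \<times> {1..}) (\<lambda>(m, m1). {1..m + m1 - 1})"

definition gain_indices :: "nat \<Rightarrow> (nat \<times> nat) set" where
  "gain_indices m = {(p, q). 1 \<le> p \<and> 1 \<le> q \<and> m + 1 \<le> p + q}"

lemma mem_coll_indices: "((m, m1), m') \<in> coll_indices \<longleftrightarrow> 1 \<le> m \<and> 1 \<le> m1 \<and> 1 \<le> m' \<and> m' < m + m1"
  unfolding coll_indices_def by auto

lemma countable_gain_indices: "countable (gain_indices m)"
  by (rule countable_subset[of _ UNIV]) auto

lemma bij_betw_gain_indices:
  "bij_betw (\<lambda>(m, pq). (pq, m)) (Sigma {1..} gain_indices) coll_indices"
  by (rule bij_betwI[where g="\<lambda>(pq, m). (m, pq)"]) (auto simp: coll_indices_def gain_indices_def)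

lemma bij_betw_coll_indices_swap:
  "bij_betw (\<lambda>((m, m1), m'). ((m1, m), m + m1 - m')) coll_indices coll_indices"
  by (rule bij_betwI[where g="\<lambda>((m, m1), m'). ((m1, m), m + m1 - m')"]) (auto simp: coll_indices_def)

lemma nn_integral_coll_indices:
  "(\<integral>\<^sup>+i. h i \<partial>count_space coll_indices)
    = (\<integral>\<^sup>+m. (\<integral>\<^sup>+m1. (\<Sum>m'=1..m+m1-1. h ((m, m1), m')) \<partial>count_space {1..}) \<partial>count_space {1..})"
proof -
  have "(\<integral>\<^sup>+i. h i \<partial>count_space coll_indices)
      = (\<integral>\<^sup>+mm1. (\<integral>\<^sup>+m'. h (mm1, m') \<partial>count_space ((\<lambda>(m, m1). {1..m + m1 - 1}) mm1)) \<partial>count_space ({1..} \<times> {1..}))"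
    unfolding coll_indices_def by (rule nn_integral_count_space_Sigma)
  also have "\<dots> = (\<integral>\<^sup>+mm1. (\<Sum>m'=1..fst mm1 + snd mm1 - 1. h (mm1, m')) \<partial>count_space ({1..} \<times> {1..}))"
    by (intro nn_integral_cong) (auto simp: nn_integral_count_space_finite)
  also have "\<dots> = (\<integral>\<^sup>+m. (\<integral>\<^sup>+m1. (\<Sum>m'=1..m+m1-1. h ((m, m1), m')) \<partial>count_space {1..}) \<partial>count_space {1..})"
    using nn_integral_count_space_Sigma[where A="{1..}" and B="\<lambda>_. {1..}"
        and h="\<lambda>mm1. \<Sum>m'=1..fst mm1 + snd mm1 - 1. h (mm1, m')"] by simp
  finally show ?thesis .
qed

lemma
  fixes w :: "(nat \<times> nat) \<times> nat \<Rightarrow> real"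
  assumes "w summable_on coll_indices"
  shows infsum_coll_indices:
      "(\<Sum>\<^sub>\<infinity>i\<in>coll_indices. w i) = (\<Sum>\<^sub>\<infinity>(m, m1)\<in>{1..} \<times> {1..}. \<Sum>m'=1..m+m1-1. w ((m, m1), m'))"
    and infsum_coll_indices_iterated:
      "(\<Sum>\<^sub>\<infinity>i\<in>coll_indices. w i) = (\<Sum>\<^sub>\<infinity>m\<in>{1..}. \<Sum>\<^sub>\<infinity>m1\<in>{1..}. \<Sum>m'=1..m+m1-1. w ((m, m1), m'))"
proof -
  have finite_sum: "(\<Sum>\<^sub>\<infinity>m'\<in>(\<lambda>(m, m1). {1..m + m1 - 1}) mm1. w (mm1, m')) = (\<Sum>m'=1..fst mm1 + snd mm1 - 1. w (mm1, m'))"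
    for mm1
    by (simp add: case_prod_beta')
  have "(\<lambda>mm1. \<Sum>\<^sub>\<infinity>m'\<in>(\<lambda>(m, m1). {1..m + m1 - 1}) mm1. w (mm1, m')) summable_on {1..} \<times> {1..}"
    using summable_on_Sigma_banach[of "\<lambda>x y. w (x, y)"] assms by (simp add: coll_indices_def)
  then have summable: "(\<lambda>(m, m1). \<Sum>m'=1..m+m1-1. w ((m, m1), m')) summable_on Sigma {1..} (\<lambda>_. {1..})"
    unfolding finite_sum by (simp add: case_prod_beta')
  have "(\<Sum>\<^sub>\<infinity>i\<in>coll_indices. w i)
      = (\<Sum>\<^sub>\<infinity>mm1\<in>{1..} \<times> {1..}. \<Sum>\<^sub>\<infinity>m'\<in>(\<lambda>(m, m1). {1..m + m1 - 1}) mm1. w (mm1, m'))"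
    unfolding coll_indices_def by (rule infsum_Sigma_banach[symmetric]) (use assms in \<open>simp add: coll_indices_def\<close>)
  then show "(\<Sum>\<^sub>\<infinity>i\<in>coll_indices. w i) = (\<Sum>\<^sub>\<infinity>(m, m1)\<in>{1..} \<times> {1..}. \<Sum>m'=1..m+m1-1. w ((m, m1), m'))"
    by (simp add: case_prod_beta')
  with infsum_Sigma_banach[OF summable]
  show "(\<Sum>\<^sub>\<infinity>i\<in>coll_indices. w i) = (\<Sum>\<^sub>\<infinity>m\<in>{1..}. \<Sum>\<^sub>\<infinity>m1\<in>{1..}. \<Sum>m'=1..m+m1-1. w ((m, m1), m'))"
    by simp
qed

lemma nn_integral_gain_indices:
  "(\<integral>\<^sup>+m. (\<integral>\<^sup>+pq. h (pq, m) \<partial>count_space (gain_indices m)) \<partial>count_space {1..})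
    = (\<integral>\<^sup>+i. h i \<partial>count_space coll_indices)"
  using nn_integral_bij_count_space[OF bij_betw_gain_indices, of h]
  by (simp add: nn_integral_count_space_Sigma case_prod_beta')

lemma infsum_gain_indices:
  fixes w :: "(nat \<times> nat) \<times> nat \<Rightarrow> real"
  assumes "w summable_on coll_indices"
  shows "(\<Sum>\<^sub>\<infinity>m\<in>{1..}. \<Sum>\<^sub>\<infinity>pq\<in>gain_indices m. w (pq, m)) = (\<Sum>\<^sub>\<infinity>i\<in>coll_indices. w i)"
proof -
  have "(\<lambda>(m, pq). w (pq, m)) summable_on Sigma {1..} gain_indices"
    using summable_on_reindex_bij_betw[OF bij_betw_gain_indices, of w] assms by (simp add: case_prod_beta')
  then have "(\<Sum>\<^sub>\<infinity>m\<in>{1..}. \<Sum>\<^sub>\<infinity>pq\<in>gain_indices m. w (pq, m)) = (\<Sum>\<^sub>\<infinity>(m, pq)\<in>Sigma {1..} gain_indices. w (pq, m))"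
    using infsum_Sigma_banach[of "\<lambda>(m, pq). w (pq, m)" "{1..}" gain_indices] by simp
  also have "\<dots> = (\<Sum>\<^sub>\<infinity>i\<in>coll_indices. w i)"
    using infsum_reindex_bij_betw[OF bij_betw_gain_indices, of w] by (simp add: case_prod_beta')
  finally show ?thesis .
qed

section \<open>The weak and the strong form\<close>

locale bme_setting =
  fixes A :: "nat \<Rightarrow> nat \<Rightarrow> nat \<Rightarrow> real"
    and B :: "real \<Rightarrow> real \<Rightarrow> real"
    and f \<phi> :: "nat \<Rightarrow> 'a::euclidean_space \<Rightarrow> real"
    and C :: real
  assumes A_nonneg: "\<forall>m m1 m'. 1 \<le> m \<longrightarrow> 1 \<le> m1 \<longrightarrow> 1 \<le> m' \<longrightarrow> m' < m + m1 \<longrightarrow> 0 \<le> A m m1 m'"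
    and A_sym: "\<forall>m m1 m'. 1 \<le> m \<longrightarrow> 1 \<le> m1 \<longrightarrow> 1 \<le> m' \<longrightarrow> m' < m + m1 \<longrightarrow>
                   A m m1 m' = A m1 m m' \<and> A m m1 m' = A m m1 (m + m1 - m')"
    and B_nonneg: "\<forall>E c. 0 \<le> E \<longrightarrow> -1 \<le> c \<longrightarrow> c \<le> 1 \<longrightarrow> 0 \<le> B E c"
    and B_meas: "(\<lambda>(E, c). B E c) \<in> borel_measurable (restrict_space borel ({0..} \<times> {-1..1}))"
    and f_meas: "\<forall>m. f m \<in> borel_measurable lborel"
    and f_decay: "(\<integral>\<^sup>+m. (\<integral>\<^sup>+m1. (\<Sum>m'=1..m+m1-1. ennreal (A m m1 m') *
                   nn_integral (lborel \<Otimes>\<^sub>M lborel \<Otimes>\<^sub>M sphere_measure)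
                     (\<lambda>(v, v1, \<Omega>). ennreal (indicator precoll (v, v1, \<Omega>) * cross_B B m m1 v v1 \<Omega>
                                          * \<bar>f m v\<bar> * \<bar>f m1 v1\<bar>)))
                 \<partial>count_space {1..}) \<partial>count_space {1..}) < \<infinity>"
    and phi_meas: "\<forall>m. \<phi> m \<in> borel_measurable lborel"
    and phi_bdd: "\<forall>m v. \<bar>\<phi> m v\<bar> \<le> C"
begin

lemma measurable_f [measurable]: "f m \<in> borel_measurable borel"
  using f_meas by simp

lemma measurable_phi [measurable]: "\<phi> m \<in> borel_measurable borel"
  using phi_meas by simp

lemma measurable_kernel [measurable]: "coll_kernel B f m m1 \<in> borel_measurable coll_measure"
  by (rule measurable_coll_kernel[OF B_meas measurable_f])

lemma A_nonneg_coll_indices: "((m, m1), m') \<in> coll_indices \<Longrightarrow> 0 \<le> A m m1 m'"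
  using A_nonneg by (simp add: mem_coll_indices)

lemma A_swap: "((m, m1), m') \<in> coll_indices \<Longrightarrow> A m1 m (m + m1 - m') = A m m1 m'"
  using A_sym by (simp add: mem_coll_indices) (metis add.commute)

definition kernel_mass :: "(nat \<times> nat) \<times> nat \<Rightarrow> ennreal" where
  "kernel_mass = (\<lambda>((m, m1), m').
     ennreal (A m m1 m') * (\<integral>\<^sup>+z. ennreal \<bar>coll_kernel B f m m1 z\<bar> \<partial>coll_measure))"

lemma nn_integral_kernel_mass_finite: "(\<integral>\<^sup>+i. kernel_mass i \<partial>count_space coll_indices) < \<infinity>"
proof -
  have "(\<integral>\<^sup>+z. ennreal \<bar>coll_kernel B f m m1 z\<bar> \<partial>coll_measure)
      = (\<integral>\<^sup>+(v, v1, \<Omega>). ennreal (indicator precoll (v, v1, \<Omega>) * cross_B B m m1 v v1 \<Omega> * \<bar>f m v\<bar> * \<bar>f m1 v1\<bar>)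
          \<partial>coll_measure)" for m m1
    using cross_B_nonneg[OF B_nonneg]
    by (intro nn_integral_cong)
       (auto simp: coll_kernel_def space_pair_measure abs_mult abs_of_nonneg[OF cross_B_nonneg[OF B_nonneg]])
  then show ?thesis
    using f_decay by (simp add: nn_integral_coll_indices kernel_mass_def)
qed

lemma nn_integral_kernel_le:
  assumes i: "((m, m1), m') \<in> coll_indices" and \<psi>: "\<And>z. \<bar>\<psi> z\<bar> \<le> C"
  shows "(\<integral>\<^sup>+z. ennreal \<bar>A m m1 m' * (coll_kernel B f m m1 z * \<psi> z)\<bar> \<partial>coll_measure)
    \<le> ennreal C * kernel_mass ((m, m1), m')"
proof -
  have "(\<integral>\<^sup>+z. ennreal \<bar>A m m1 m' * (coll_kernel B f m m1 z * \<psi> z)\<bar> \<partial>coll_measure)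
      \<le> (\<integral>\<^sup>+z. ennreal (C * A m m1 m') * ennreal \<bar>coll_kernel B f m m1 z\<bar> \<partial>coll_measure)"
  proof (intro nn_integral_mono)
    fix z
    have "\<bar>\<psi> z\<bar> * (A m m1 m' * \<bar>coll_kernel B f m m1 z\<bar>) \<le> C * (A m m1 m' * \<bar>coll_kernel B f m m1 z\<bar>)"
      using \<psi>[of z] A_nonneg_coll_indices[OF i] by (intro mult_right_mono) simp_all
    then have "\<bar>A m m1 m' * (coll_kernel B f m m1 z * \<psi> z)\<bar> \<le> C * A m m1 m' * \<bar>coll_kernel B f m m1 z\<bar>"
      using A_nonneg_coll_indices[OF i] by (simp add: abs_mult ac_simps)
    moreover have "0 \<le> C * A m m1 m'"
      using \<psi>[of z] A_nonneg_coll_indices[OF i] by simp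
    ultimately show "ennreal \<bar>A m m1 m' * (coll_kernel B f m m1 z * \<psi> z)\<bar>
        \<le> ennreal (C * A m m1 m') * ennreal \<bar>coll_kernel B f m m1 z\<bar>"
      by (simp add: ennreal_mult[symmetric] ennreal_leI)
  qed
  also have "\<dots> = ennreal C * kernel_mass ((m, m1), m')"
    using \<psi>[of undefined] A_nonneg_coll_indices[OF i]
    by (simp add: kernel_mass_def nn_integral_cmult ennreal_mult mult.assoc)
  finally show ?thesis .
qed

lemma abs_weak_term_le:
  assumes "((m, m1), m') \<in> coll_indices" and "\<And>z. \<bar>\<psi> z\<bar> \<le> C"
  shows "ennreal \<bar>A m m1 m' * (\<integral>z. coll_kernel B f m m1 z * \<psi> z \<partial>coll_measure)\<bar>
    \<le> ennreal C * kernel_mass ((m, m1), m')"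
proof -
  have "ennreal \<bar>A m m1 m' * (\<integral>z. coll_kernel B f m m1 z * \<psi> z \<partial>coll_measure)\<bar>
      = ennreal \<bar>\<integral>z. A m m1 m' * (coll_kernel B f m m1 z * \<psi> z) \<partial>coll_measure\<bar>"
    by simp
  also have "\<dots> \<le> (\<integral>\<^sup>+z. ennreal \<bar>A m m1 m' * (coll_kernel B f m m1 z * \<psi> z)\<bar> \<partial>coll_measure)"
    by (rule abs_integral_le_nn_integral_abs)
  also have "\<dots> \<le> ennreal C * kernel_mass ((m, m1), m')"
    by (rule nn_integral_kernel_le[of m m1 m' \<psi>, OF assms])
  finally show ?thesis .
qed

lemma summable_on_coll_indices:
  assumes "\<And>m m1 m'. ((m, m1), m') \<in> coll_indices \<Longrightarrow> ennreal \<bar>w ((m, m1), m')\<bar> \<le> ennreal C * kernel_mass ((m, m1), m')"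
  shows "w summable_on coll_indices"
proof (rule summable_on_of_nn_integral_abs_finite)
  have "(\<integral>\<^sup>+i. ennreal \<bar>w i\<bar> \<partial>count_space coll_indices) \<le> (\<integral>\<^sup>+i. ennreal C * kernel_mass i \<partial>count_space coll_indices)"
    using assms by (intro nn_integral_mono) (auto simp: coll_indices_def)
  also have "\<dots> < \<infinity>"
    using nn_integral_kernel_mass_finite by (simp add: nn_integral_cmult ennreal_mult_less_top)
  finally show "(\<integral>\<^sup>+i. ennreal \<bar>w i\<bar> \<partial>count_space coll_indices) < \<infinity>" .
qed

lemma integrable_coll_kernel:
  assumes i: "((m, m1), m') \<in> coll_indices" and A: "A m m1 m' \<noteq> 0"
  shows "integrable coll_measure (coll_kernel B f m m1)"
proof (rule integrableI_bounded)
  have "kernel_mass ((m, m1), m') < \<infinity>"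
    using member_le_nn_integral_count_space[OF i, of kernel_mass] nn_integral_kernel_mass_finite by simp
  moreover have "A m m1 m' > 0"
    using A A_nonneg_coll_indices[OF i] by simp
  ultimately show "(\<integral>\<^sup>+z. ennreal (norm (coll_kernel B f m m1 z)) \<partial>coll_measure) < \<infinity>"
    by (auto simp: kernel_mass_def ennreal_mult_less_top)
qed simp

definition weak_gain :: "(nat \<times> nat) \<times> nat \<Rightarrow> real" where
  "weak_gain = (\<lambda>((m, m1), m'). A m m1 m' *
     (\<integral>(v, v1, \<Omega>). coll_kernel B f m m1 (v, v1, \<Omega>) * \<phi> m' (coll_v m m1 m' v v1 \<Omega>) \<partial>coll_measure))"

definition weak_loss :: "(nat \<times> nat) \<times> nat \<Rightarrow> real" where
  "weak_loss = (\<lambda>((m, m1), m'). A m m1 m' *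
     (\<integral>(v, v1, \<Omega>). coll_kernel B f m m1 (v, v1, \<Omega>) * \<phi> m v \<partial>coll_measure))"

lemma summable_weak_gain: "weak_gain summable_on coll_indices"
  using phi_bdd
  by (intro summable_on_coll_indices) (auto simp: weak_gain_def case_prod_beta' intro!: abs_weak_term_le)

lemma summable_weak_loss: "weak_loss summable_on coll_indices"
  using phi_bdd
  by (intro summable_on_coll_indices) (auto simp: weak_loss_def case_prod_beta' intro!: abs_weak_term_le)


lemma integral_coll_kernel_swap:
  assumes [measurable]: "\<psi> \<in> borel_measurable coll_measure"
  shows "(\<integral>(v, v1, \<Omega>). coll_kernel B f m m1 (v, v1, \<Omega>) * \<psi> (v1, v, - \<Omega>) \<partial>coll_measure)
    = (\<integral>z. coll_kernel B f m1 m z * \<psi> z \<partial>coll_measure)"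
proof -
  have "(\<integral>(v, v1, \<Omega>). coll_kernel B f m m1 (v, v1, \<Omega>) * \<psi> (v1, v, - \<Omega>) \<partial>coll_measure)
      = (\<integral>(v, v1, \<Omega>). coll_kernel B f m1 m (v1, v, - \<Omega>) * \<psi> (v1, v, - \<Omega>) \<partial>coll_measure)"
    by (simp add: coll_kernel_swap)
  also have "\<dots> = (\<integral>z. (\<lambda>z. coll_kernel B f m1 m z * \<psi> z) ((\<lambda>(v, v1, \<Omega>). (v1, v, - \<Omega>)) z) \<partial>coll_measure)"
    by (simp add: case_prod_beta')
  also have "\<dots> = 1 * (\<integral>z. coll_kernel B f m1 m z * \<psi> z \<partial>coll_measure)"
    using scales_coll_measure_swap by (intro scales_integral) simp_all
  finally show ?thesis
    by simp
qed

lemma set_integral_weak_summand: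
  assumes i: "((m, m1), m') \<in> coll_indices" and A: "A m m1 m' \<noteq> 0"
  shows "set_lebesgue_integral coll_measure precoll
      (\<lambda>(v, v1, \<Omega>). cross_B B m m1 v v1 \<Omega>
          * (\<phi> m' (coll_v m m1 m' v v1 \<Omega>) + \<phi> (m + m1 - m') (coll_v1 m m1 m' v v1 \<Omega>) - \<phi> m v - \<phi> m1 v1)
          * f m v * f m1 v1)
    = (\<integral>(v, v1, \<Omega>). coll_kernel B f m m1 (v, v1, \<Omega>) * \<phi> m' (coll_v m m1 m' v v1 \<Omega>) \<partial>coll_measure)
      + (\<integral>(v, v1, \<Omega>). coll_kernel B f m m1 (v, v1, \<Omega>) * \<phi> (m + m1 - m') (coll_v1 m m1 m' v v1 \<Omega>) \<partial>coll_measure)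
      - (\<integral>(v, v1, \<Omega>). coll_kernel B f m m1 (v, v1, \<Omega>) * \<phi> m v \<partial>coll_measure)
      - (\<integral>(v, v1, \<Omega>). coll_kernel B f m m1 (v, v1, \<Omega>) * \<phi> m1 v1 \<partial>coll_measure)"
proof -
  let ?K = "coll_kernel B f m m1"
  let ?v' = "\<lambda>z. coll_v m m1 m' (fst z) (fst (snd z)) (snd (snd z))"
  let ?v1' = "\<lambda>z. coll_v1 m m1 m' (fst z) (fst (snd z)) (snd (snd z))"
  have "integrable coll_measure (\<lambda>z. ?K z * \<phi> k (g z))"
    if [measurable]: "g \<in> borel_measurable coll_measure" for k g
    using phi_bdd by (intro integrable_mult_bounded[OF integrable_coll_kernel[OF i A]]) auto
  then have "integrable coll_measure (\<lambda>z. ?K z * \<phi> m' (?v' z))"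
      "integrable coll_measure (\<lambda>z. ?K z * \<phi> (m + m1 - m') (?v1' z))"
      "integrable coll_measure (\<lambda>z. ?K z * \<phi> m (fst z))"
      "integrable coll_measure (\<lambda>z. ?K z * \<phi> m1 (fst (snd z)))"
    by measurable
  moreover have "set_lebesgue_integral coll_measure precoll
      (\<lambda>(v, v1, \<Omega>). cross_B B m m1 v v1 \<Omega>
          * (\<phi> m' (coll_v m m1 m' v v1 \<Omega>) + \<phi> (m + m1 - m') (coll_v1 m m1 m' v v1 \<Omega>) - \<phi> m v - \<phi> m1 v1)
          * f m v * f m1 v1)
      = (\<integral>z. ?K z * \<phi> m' (?v' z) + ?K z * \<phi> (m + m1 - m') (?v1' z) - ?K z * \<phi> m (fst z)
          - ?K z * \<phi> m1 (fst (snd z)) \<partial>coll_measure)"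
    unfolding set_lebesgue_integral_def
    by (intro Bochner_Integration.integral_cong) (auto simp: coll_kernel_def algebra_simps)
  ultimately show ?thesis
    by (simp add: case_prod_beta')
qed

lemma weak_summand_eq:
  assumes i: "((m, m1), m') \<in> coll_indices"
  shows "A m m1 m' * set_lebesgue_integral coll_measure precoll
      (\<lambda>(v, v1, \<Omega>). cross_B B m m1 v v1 \<Omega>
          * (\<phi> m' (coll_v m m1 m' v v1 \<Omega>) + \<phi> (m + m1 - m') (coll_v1 m m1 m' v v1 \<Omega>) - \<phi> m v - \<phi> m1 v1)
          * f m v * f m1 v1)
    = weak_gain ((m, m1), m') + weak_gain ((m1, m), m + m1 - m')
        - weak_loss ((m, m1), m') - weak_loss ((m1, m), m + m1 - m')"
proof (cases "A m m1 m' = 0")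
  case True
  then show ?thesis
    using A_swap[OF i] by (simp add: weak_gain_def weak_loss_def)
next
  case False
  have m': "m' < m + m1"
    using i by (simp add: mem_coll_indices)
  have "(\<integral>(v, v1, \<Omega>). coll_kernel B f m m1 (v, v1, \<Omega>) * \<phi> (m + m1 - m') (coll_v1 m m1 m' v v1 \<Omega>) \<partial>coll_measure)
      = (\<integral>(v, v1, \<Omega>). coll_kernel B f m1 m (v, v1, \<Omega>) * \<phi> (m + m1 - m') (coll_v m1 m (m + m1 - m') v v1 \<Omega>)
          \<partial>coll_measure)"
    using integral_coll_kernel_swap[of "\<lambda>(v, v1, \<Omega>). \<phi> (m + m1 - m') (coll_v m1 m (m + m1 - m') v v1 \<Omega>)"]
    by (simp add: case_prod_beta' coll_v_swap[OF m'])
  moreover have "(\<integral>(v, v1, \<Omega>). coll_kernel B f m m1 (v, v1, \<Omega>) * \<phi> m1 v1 \<partial>coll_measure)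
      = (\<integral>(v, v1, \<Omega>). coll_kernel B f m1 m (v, v1, \<Omega>) * \<phi> m1 v \<partial>coll_measure)"
    using integral_coll_kernel_swap[of "\<lambda>(v, v1, \<Omega>). \<phi> m1 v"] by (simp add: case_prod_beta')
  ultimately show ?thesis
    using A_swap[OF i] unfolding set_integral_weak_summand[OF i False]
    by (simp add: weak_gain_def weak_loss_def right_diff_distrib distrib_left)
qed

lemma weak_rhs_eq:
  "BME_weak_rhs A B f \<phi> = (\<Sum>\<^sub>\<infinity>i\<in>coll_indices. weak_gain i) - (\<Sum>\<^sub>\<infinity>i\<in>coll_indices. weak_loss i)"
proof -
  define \<sigma> :: "(nat \<times> nat) \<times> nat \<Rightarrow> (nat \<times> nat) \<times> nat" where
    "\<sigma> = (\<lambda>((m, m1), m'). ((m1, m), m + m1 - m'))"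
  define G where "G = (\<Sum>\<^sub>\<infinity>i\<in>coll_indices. weak_gain i)"
  define L where "L = (\<Sum>\<^sub>\<infinity>i\<in>coll_indices. weak_loss i)"
  have gain: "(weak_gain has_sum G) coll_indices" "((\<lambda>i. weak_gain (\<sigma> i)) has_sum G) coll_indices"
    using summable_weak_gain has_sum_reindex_bij_betw[OF bij_betw_coll_indices_swap, of weak_gain]
    by (simp_all add: G_def \<sigma>_def)
  have loss: "(weak_loss has_sum L) coll_indices" "((\<lambda>i. weak_loss (\<sigma> i)) has_sum L) coll_indices"
    using summable_weak_loss has_sum_reindex_bij_betw[OF bij_betw_coll_indices_swap, of weak_loss]
    by (simp_all add: L_def \<sigma>_def)
  define w where "w = (\<lambda>((m, m1), m'). A m m1 m' * set_lebesgue_integral coll_measure precoll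
      (\<lambda>(v, v1, \<Omega>). cross_B B m m1 v v1 \<Omega>
          * (\<phi> m' (coll_v m m1 m' v v1 \<Omega>) + \<phi> (m + m1 - m') (coll_v1 m m1 m' v v1 \<Omega>) - \<phi> m v - \<phi> m1 v1)
          * f m v * f m1 v1))"
  have "((\<lambda>i. weak_gain i + weak_gain (\<sigma> i) - weak_loss i - weak_loss (\<sigma> i)) has_sum (G + G - L - L)) coll_indices"
    by (intro has_sum_diff has_sum_add gain loss)
  then have "(w has_sum (G + G - L - L)) coll_indices"
    by (rule has_sum_cong[THEN iffD1, rotated])
       (auto simp: w_def \<sigma>_def coll_indices_def weak_summand_eq)
  then have "w summable_on coll_indices" and "(\<Sum>\<^sub>\<infinity>i\<in>coll_indices. w i) = G + G - L - L"
    by (auto simp: summable_on_def intro: infsumI)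
  then have "(\<Sum>\<^sub>\<infinity>(m, m1)\<in>{1..} \<times> {1..}. \<Sum>m'=1..m+m1-1. w ((m, m1), m')) = G + G - L - L"
    by (simp add: infsum_coll_indices)
  then show ?thesis
    unfolding BME_weak_rhs_def G_def[symmetric] L_def[symmetric] by (simp add: w_def)
qed


definition gain_density :: "nat \<Rightarrow> nat \<Rightarrow> nat \<Rightarrow> 'a \<Rightarrow> 'a \<times> 'a \<Rightarrow> real" where
  "gain_density m p q v = (\<lambda>(v1, \<Omega>). cross_B B m (p + q - m) v v1 \<Omega>
     * f p (coll_v m (p + q - m) p v v1 \<Omega>) * f q (coll_v1 m (p + q - m) p v v1 \<Omega>)
     * (real m * real (p + q - m) / (real p * real q)) powr (real DIM('a) / 2))"

definition loss_density :: "nat \<Rightarrow> nat \<Rightarrow> 'a \<Rightarrow> 'a \<times> 'a \<Rightarrow> real" where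
  "loss_density m m1 v = (\<lambda>(v1, \<Omega>). cross_B B m m1 v v1 \<Omega> * f m v * f m1 v1)"

definition strong_gain :: "nat \<Rightarrow> 'a \<Rightarrow> real" where
  "strong_gain m v = (\<Sum>\<^sub>\<infinity>(p, q)\<in>gain_indices m. A p q m *
     set_lebesgue_integral (lborel \<Otimes>\<^sub>M sphere_measure) {(v1, \<Omega>). (v - v1) \<bullet> \<Omega> \<le> 0} (gain_density m p q v))"

definition strong_loss :: "nat \<Rightarrow> 'a \<Rightarrow> real" where
  "strong_loss m v = (\<Sum>\<^sub>\<infinity>m1\<in>{1..}. (\<Sum>m'=1..m+m1-1. A m m1 m') *
     set_lebesgue_integral (lborel \<Otimes>\<^sub>M sphere_measure) {(v1, \<Omega>). (v - v1) \<bullet> \<Omega> \<le> 0} (loss_density m m1 v))"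

lemma BME_strong_eq: "BME_strong A B f m v = strong_gain m v - strong_loss m v"
  unfolding BME_strong_def strong_gain_def strong_loss_def gain_density_def loss_density_def gain_indices_def
  by (simp add: sum_distrib_right)

text \<open>By Fubini, the tested strong gain term is a sum over \<open>m\<close> and \<open>(p, q)\<close> of integrals of
  \<open>gain_fibre\<close> over the collision measure; substituting the collision map for the masses
  \<open>m, p + q - m \<mapsto> p, q\<close> turns each of them into a term of the weak gain.\<close>

definition gain_fibre :: "nat \<Rightarrow> nat \<times> nat \<Rightarrow> 'a \<times> 'a \<times> 'a \<Rightarrow> real" where
  "gain_fibre m = (\<lambda>(p, q) z. \<phi> m (fst z) * (A p q m * (indicator precoll z * gain_density m p q (fst z) (snd z))))"

lemma integral_gain_fibre_section:
  "(\<integral>y. gain_fibre m (p, q) (v, y) \<partial>(lborel \<Otimes>\<^sub>M sphere_measure)) = \<phi> m v * (A p q m *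
     set_lebesgue_integral (lborel \<Otimes>\<^sub>M sphere_measure) {(v1, \<Omega>). (v - v1) \<bullet> \<Omega> \<le> 0} (gain_density m p q v))"
  by (simp add: gain_fibre_def set_lebesgue_integral_def indicator_precoll_section)

lemma gain_fibre_eq:
  assumes m: "1 \<le> m" and pq: "(p, q) \<in> gain_indices m" and z: "z \<in> space coll_measure"
  shows "gain_fibre m (p, q) z = A p q m * (coll_ratio m (p + q - m) p ^ DIM('a) *
    (\<lambda>(w, w1, \<Theta>). coll_kernel B f p q (w, w1, \<Theta>) * \<phi> m (coll_v p q m w w1 \<Theta>)) (coll_map m (p + q - m) p z))"
proof -
  obtain v v1 \<Omega> where z_eq: "z = (v, v1, \<Omega>)"
    by (cases z)
  have valid: "1 \<le> m" "1 \<le> p + q - m" "1 \<le> p" "p < m + (p + q - m)"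
    and masses: "m + (p + q - m) - p = q"
    using m pq by (auto simp: gain_indices_def)
  have n: "norm \<Omega> = 1"
    using z unfolding z_eq by (rule norm_in_space_coll_measure)
  have "(real m * real (p + q - m) / (real p * real q)) powr (real DIM('a) / 2) = coll_ratio m (p + q - m) p ^ DIM('a)"
    using valid by (intro powr_eq_coll_ratio_power) auto
  then show ?thesis
    using coll_kernel_coll_map[OF valid n, of B f v v1] coll_v_reverse[OF valid n, of v v1]
    unfolding masses z_eq
    by (simp add: gain_fibre_def gain_density_def coll_map_def ac_simps)
qed

lemma measurable_gain_fibre:
  assumes "1 \<le> m" and "pq \<in> gain_indices m"
  shows "gain_fibre m pq \<in> borel_measurable coll_measure"
proof -
  obtain p q where pq: "pq = (p, q)"
    by (cases pq)
  have valid: "1 \<le> m" "1 \<le> p + q - m" "1 \<le> p" "p < m + (p + q - m)"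
    using assms by (auto simp: gain_indices_def pq)
  have "(\<lambda>z. A p q m * (coll_ratio m (p + q - m) p ^ DIM('a) *
      (\<lambda>(w, w1, \<Theta>). coll_kernel B f p q (w, w1, \<Theta>) * \<phi> m (coll_v p q m w w1 \<Theta>)) (coll_map m (p + q - m) p z)))
      \<in> borel_measurable coll_measure"
    using scales_measurable[OF scales_coll_map[OF valid]] by measurable
  then show ?thesis
    using gain_fibre_eq[OF assms[unfolded pq]] by (subst measurable_cong) (auto simp: pq)
qed

lemma integral_gain_fibre:
  assumes "1 \<le> m" and "pq \<in> gain_indices m"
  shows "(\<integral>z. gain_fibre m pq z \<partial>coll_measure) = weak_gain (pq, m)"
proof -
  obtain p q where pq: "pq = (p, q)"
    by (cases pq)
  have valid: "1 \<le> m" "1 \<le> p + q - m" "1 \<le> p" "p < m + (p + q - m)"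
    using assms by (auto simp: gain_indices_def pq)
  have "(\<integral>z. gain_fibre m pq z \<partial>coll_measure) = A p q m * (\<integral>z. coll_ratio m (p + q - m) p ^ DIM('a) *
      (\<lambda>(w, w1, \<Theta>). coll_kernel B f p q (w, w1, \<Theta>) * \<phi> m (coll_v p q m w w1 \<Theta>)) (coll_map m (p + q - m) p z) \<partial>coll_measure)"
    unfolding integral_mult_right_zero[symmetric] using gain_fibre_eq[OF assms[unfolded pq]]
    by (intro Bochner_Integration.integral_cong) (simp_all add: pq)
  also have "\<dots> = weak_gain (pq, m)"
    by (subst integral_coll_map[OF valid]) (simp_all add: weak_gain_def pq)
  finally show ?thesis .
qed

lemma nn_integral_gain_fibre_le:
  assumes m: "1 \<le> m" and "pq \<in> gain_indices m"
  shows "(\<integral>\<^sup>+z. ennreal \<bar>gain_fibre m pq z\<bar> \<partial>coll_measure) \<le> ennreal C * kernel_mass (pq, m)"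
proof -
  obtain p q where pq: "pq = (p, q)"
    by (cases pq)
  have valid: "1 \<le> m" "1 \<le> p + q - m" "1 \<le> p" "p < m + (p + q - m)"
    and i: "((p, q), m) \<in> coll_indices"
    using assms by (auto simp: gain_indices_def mem_coll_indices pq)
  let ?G = "\<lambda>z. A p q m * (coll_kernel B f p q z * \<phi> m (coll_v p q m (fst z) (fst (snd z)) (snd (snd z))))"
  have "(\<integral>\<^sup>+z. ennreal \<bar>gain_fibre m pq z\<bar> \<partial>coll_measure)
      = (\<integral>\<^sup>+z. ennreal (coll_ratio m (p + q - m) p ^ DIM('a) * \<bar>?G (coll_map m (p + q - m) p z)\<bar>) \<partial>coll_measure)"
    using gain_fibre_eq[OF m assms(2)[unfolded pq]] coll_ratio_pos[OF valid]
    by (intro nn_integral_cong) (simp add: pq abs_mult case_prod_beta')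
  also have "\<dots> = (\<integral>\<^sup>+z. ennreal \<bar>?G z\<bar> \<partial>coll_measure)"
    by (rule nn_integral_coll_map[OF valid]) measurable
  also have "\<dots> \<le> ennreal C * kernel_mass (pq, m)"
    unfolding pq using phi_bdd by (intro nn_integral_kernel_le[OF i]) simp
  finally show ?thesis .
qed

lemma infsum_integral_gain_fibre_section:
  "(\<Sum>\<^sub>\<infinity>pq\<in>gain_indices m. \<integral>y. gain_fibre m pq (v, y) \<partial>(lborel \<Otimes>\<^sub>M sphere_measure)) = \<phi> m v * strong_gain m v"
proof -
  have "(\<Sum>\<^sub>\<infinity>pq\<in>gain_indices m. \<integral>y. gain_fibre m pq (v, y) \<partial>(lborel \<Otimes>\<^sub>M sphere_measure))
      = (\<Sum>\<^sub>\<infinity>pq\<in>gain_indices m. \<phi> m v * (case pq of (p, q) \<Rightarrow> A p q m *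
          set_lebesgue_integral (lborel \<Otimes>\<^sub>M sphere_measure) {(v1, \<Omega>). (v - v1) \<bullet> \<Omega> \<le> 0} (gain_density m p q v)))"
    by (intro infsum_cong) (auto simp: integral_gain_fibre_section)
  then show ?thesis
    by (simp add: strong_gain_def infsum_cmult_right')
qed

lemma nn_integral_gain_fibre_finite:
  "(\<integral>\<^sup>+m. (\<integral>\<^sup>+pq. (\<integral>\<^sup>+z. ennreal \<bar>gain_fibre m pq z\<bar> \<partial>coll_measure)
     \<partial>count_space (gain_indices m)) \<partial>count_space {1..}) < \<infinity>"
proof -
  have "(\<integral>\<^sup>+m. (\<integral>\<^sup>+pq. (\<integral>\<^sup>+z. ennreal \<bar>gain_fibre m pq z\<bar> \<partial>coll_measure)
      \<partial>count_space (gain_indices m)) \<partial>count_space {1..})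
      \<le> (\<integral>\<^sup>+m. (\<integral>\<^sup>+pq. ennreal C * kernel_mass (pq, m) \<partial>count_space (gain_indices m)) \<partial>count_space {1..})"
    by (intro nn_integral_mono nn_integral_gain_fibre_le) auto
  also have "\<dots> = (\<integral>\<^sup>+i. ennreal C * kernel_mass i \<partial>count_space coll_indices)"
    by (rule nn_integral_gain_indices)
  also have "\<dots> < \<infinity>"
    using nn_integral_kernel_mass_finite by (simp add: nn_integral_cmult ennreal_mult_less_top)
  finally show ?thesis .
qed

lemma
  shows has_sum_integral_strong_gain:
      "((\<lambda>m. \<integral>v. \<phi> m v * strong_gain m v \<partial>lborel) has_sum (\<Sum>\<^sub>\<infinity>i\<in>coll_indices. weak_gain i)) {1..}"
    and integrable_strong_gain: "1 \<le> m \<Longrightarrow> integrable lborel (\<lambda>v. \<phi> m v * strong_gain m v)"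
proof -
  note fubini = has_sum_integral_infsum_integral[OF sigma_finite_lborel sigma_finite_lborel_sphere_measure
      countable_gain_indices _ nn_integral_gain_fibre_finite]
    integrable_infsum_integral_member[OF sigma_finite_lborel sigma_finite_lborel_sphere_measure
      countable_gain_indices _ nn_integral_gain_fibre_finite]
  have "(\<Sum>\<^sub>\<infinity>m\<in>{1..}. \<Sum>\<^sub>\<infinity>pq\<in>gain_indices m. \<integral>z. gain_fibre m pq z \<partial>coll_measure)
      = (\<Sum>\<^sub>\<infinity>m\<in>{1..}. \<Sum>\<^sub>\<infinity>pq\<in>gain_indices m. weak_gain (pq, m))"
    by (intro infsum_cong) (simp add: integral_gain_fibre)
  also have "\<dots> = (\<Sum>\<^sub>\<infinity>i\<in>coll_indices. weak_gain i)"
    by (rule infsum_gain_indices[OF summable_weak_gain])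
  finally show "((\<lambda>m. \<integral>v. \<phi> m v * strong_gain m v \<partial>lborel) has_sum (\<Sum>\<^sub>\<infinity>i\<in>coll_indices. weak_gain i)) {1..}"
    using fubini(1) measurable_gain_fibre by (simp add: infsum_integral_gain_fibre_section)
  show "integrable lborel (\<lambda>v. \<phi> m v * strong_gain m v)" if "1 \<le> m"
    using fubini(2)[of m] measurable_gain_fibre that by (simp add: infsum_integral_gain_fibre_section)
qed

text \<open>All loss terms with the same incoming masses share one integrand, so the finite sum over the
  outgoing mass is absorbed into the coefficient.\<close>

definition loss_fibre :: "nat \<Rightarrow> nat \<Rightarrow> 'a \<times> 'a \<times> 'a \<Rightarrow> real" where
  "loss_fibre m m1 z = \<phi> m (fst z) * ((\<Sum>m'=1..m+m1-1. A m m1 m') *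
     (indicator precoll z * loss_density m m1 (fst z) (snd z)))"

lemma loss_fibre_eq: "loss_fibre m m1 z = (\<Sum>m'=1..m+m1-1. A m m1 m') * (coll_kernel B f m m1 z * \<phi> m (fst z))"
  by (cases z) (simp add: loss_fibre_def loss_density_def coll_kernel_def ac_simps)

lemma integral_loss_fibre_section:
  "(\<integral>y. loss_fibre m m1 (v, y) \<partial>(lborel \<Otimes>\<^sub>M sphere_measure)) = \<phi> m v * ((\<Sum>m'=1..m+m1-1. A m m1 m') *
     set_lebesgue_integral (lborel \<Otimes>\<^sub>M sphere_measure) {(v1, \<Omega>). (v - v1) \<bullet> \<Omega> \<le> 0} (loss_density m m1 v))"
  by (simp add: loss_fibre_def set_lebesgue_integral_def indicator_precoll_section)

lemma integral_loss_fibre: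
  "(\<integral>z. loss_fibre m m1 z \<partial>coll_measure) = (\<Sum>m'=1..m+m1-1. weak_loss ((m, m1), m'))"
proof -
  have "(\<integral>z. loss_fibre m m1 z \<partial>coll_measure)
      = (\<Sum>m'=1..m+m1-1. A m m1 m') * (\<integral>z. coll_kernel B f m m1 z * \<phi> m (fst z) \<partial>coll_measure)"
    by (simp add: loss_fibre_eq)
  then show ?thesis
    by (simp add: weak_loss_def sum_distrib_right case_prod_beta')
qed

lemma nn_integral_loss_fibre_le:
  assumes "1 \<le> m" "1 \<le> m1"
  shows "(\<integral>\<^sup>+z. ennreal \<bar>loss_fibre m m1 z\<bar> \<partial>coll_measure) \<le> (\<Sum>m'=1..m+m1-1. ennreal C * kernel_mass ((m, m1), m'))"
proof -
  have i: "((m, m1), m') \<in> coll_indices" if "m' \<in> {1..m+m1-1}" for m'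
    using assms that by (auto simp: mem_coll_indices)
  have "(\<integral>\<^sup>+z. ennreal \<bar>loss_fibre m m1 z\<bar> \<partial>coll_measure)
      = (\<integral>\<^sup>+z. (\<Sum>m'=1..m+m1-1. ennreal \<bar>A m m1 m' * (coll_kernel B f m m1 z * \<phi> m (fst z))\<bar>) \<partial>coll_measure)"
  proof (intro nn_integral_cong)
    fix z
    have "0 \<le> (\<Sum>m'=1..m+m1-1. A m m1 m')"
      using A_nonneg_coll_indices[OF i] by (intro sum_nonneg) simp
    then have "\<bar>loss_fibre m m1 z\<bar> = (\<Sum>m'=1..m+m1-1. A m m1 m') * \<bar>coll_kernel B f m m1 z * \<phi> m (fst z)\<bar>"
      by (simp add: loss_fibre_eq abs_mult)
    also have "\<dots> = (\<Sum>m'=1..m+m1-1. \<bar>A m m1 m' * (coll_kernel B f m m1 z * \<phi> m (fst z))\<bar>)"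
      unfolding sum_distrib_right using A_nonneg_coll_indices[OF i] by (intro sum.cong) (simp_all add: abs_mult)
    finally show "ennreal \<bar>loss_fibre m m1 z\<bar>
        = (\<Sum>m'=1..m+m1-1. ennreal \<bar>A m m1 m' * (coll_kernel B f m m1 z * \<phi> m (fst z))\<bar>)"
      by simp
  qed
  also have "\<dots> = (\<Sum>m'=1..m+m1-1. \<integral>\<^sup>+z. ennreal \<bar>A m m1 m' * (coll_kernel B f m m1 z * \<phi> m (fst z))\<bar> \<partial>coll_measure)"
    by (rule nn_integral_sum) measurable
  also have "\<dots> \<le> (\<Sum>m'=1..m+m1-1. ennreal C * kernel_mass ((m, m1), m'))"
    using phi_bdd by (intro sum_mono nn_integral_kernel_le i) simp_all
  finally show ?thesis .
qed

lemma infsum_integral_loss_fibre_section: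
  "(\<Sum>\<^sub>\<infinity>m1\<in>{1..}. \<integral>y. loss_fibre m m1 (v, y) \<partial>(lborel \<Otimes>\<^sub>M sphere_measure)) = \<phi> m v * strong_loss m v"
  by (simp add: integral_loss_fibre_section strong_loss_def infsum_cmult_right')

lemma measurable_loss_fibre: "loss_fibre m m1 \<in> borel_measurable coll_measure"
  unfolding loss_fibre_eq[abs_def] by measurable

lemma nn_integral_loss_fibre_finite:
  "(\<integral>\<^sup>+m. (\<integral>\<^sup>+m1. (\<integral>\<^sup>+z. ennreal \<bar>loss_fibre m m1 z\<bar> \<partial>coll_measure)
     \<partial>count_space {1..}) \<partial>count_space {1..}) < \<infinity>"
proof -
  have "(\<integral>\<^sup>+m. (\<integral>\<^sup>+m1. (\<integral>\<^sup>+z. ennreal \<bar>loss_fibre m m1 z\<bar> \<partial>coll_measure)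
      \<partial>count_space {1..}) \<partial>count_space {1..})
      \<le> (\<integral>\<^sup>+m. (\<integral>\<^sup>+m1. (\<Sum>m'=1..m+m1-1. ennreal C * kernel_mass ((m, m1), m'))
      \<partial>count_space {1..}) \<partial>count_space {1..})"
    by (intro nn_integral_mono nn_integral_loss_fibre_le) auto
  also have "\<dots> = (\<integral>\<^sup>+i. ennreal C * kernel_mass i \<partial>count_space coll_indices)"
    by (rule nn_integral_coll_indices[symmetric])
  also have "\<dots> < \<infinity>"
    using nn_integral_kernel_mass_finite by (simp add: nn_integral_cmult ennreal_mult_less_top)
  finally show ?thesis .
qed

lemma
  shows has_sum_integral_strong_loss:
      "((\<lambda>m. \<integral>v. \<phi> m v * strong_loss m v \<partial>lborel) has_sum (\<Sum>\<^sub>\<infinity>i\<in>coll_indices. weak_loss i)) {1..}"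
    and integrable_strong_loss: "1 \<le> m \<Longrightarrow> integrable lborel (\<lambda>v. \<phi> m v * strong_loss m v)"
proof -
  note fubini = has_sum_integral_infsum_integral[OF sigma_finite_lborel sigma_finite_lborel_sphere_measure
      countableI_type measurable_loss_fibre nn_integral_loss_fibre_finite]
    integrable_infsum_integral_member[OF sigma_finite_lborel sigma_finite_lborel_sphere_measure
      countableI_type measurable_loss_fibre nn_integral_loss_fibre_finite]
  have "(\<Sum>\<^sub>\<infinity>m\<in>{1..}. \<Sum>\<^sub>\<infinity>m1\<in>{1..}. \<integral>z. loss_fibre m m1 z \<partial>coll_measure) = (\<Sum>\<^sub>\<infinity>i\<in>coll_indices. weak_loss i)"
    unfolding integral_loss_fibre by (rule infsum_coll_indices_iterated[OF summable_weak_loss, symmetric])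
  with fubini(1) show "((\<lambda>m. \<integral>v. \<phi> m v * strong_loss m v \<partial>lborel) has_sum (\<Sum>\<^sub>\<infinity>i\<in>coll_indices. weak_loss i)) {1..}"
    unfolding infsum_integral_loss_fibre_section by simp
  show "integrable lborel (\<lambda>v. \<phi> m v * strong_loss m v)" if "1 \<le> m"
    using fubini(2)[of m] that unfolding infsum_integral_loss_fibre_section by simp
qed

end

theorem lemma2p1:
  fixes A :: "nat \<Rightarrow> nat \<Rightarrow> nat \<Rightarrow> real"
    and B :: "real \<Rightarrow> real \<Rightarrow> real"
    and f \<phi> :: "nat \<Rightarrow> 'a::euclidean_space \<Rightarrow> real"
    and C :: real
  assumes A_nonneg: "\<forall>m m1 m'. 1 \<le> m \<longrightarrow> 1 \<le> m1 \<longrightarrow> 1 \<le> m' \<longrightarrow> m' < m + m1 \<longrightarrow> 0 \<le> A m m1 m'"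
    and A_sym: "\<forall>m m1 m'. 1 \<le> m \<longrightarrow> 1 \<le> m1 \<longrightarrow> 1 \<le> m' \<longrightarrow> m' < m + m1 \<longrightarrow>
                   A m m1 m' = A m1 m m' \<and> A m m1 m' = A m m1 (m + m1 - m')"
    and B_nonneg: "\<forall>E c. 0 \<le> E \<longrightarrow> -1 \<le> c \<longrightarrow> c \<le> 1 \<longrightarrow> 0 \<le> B E c"
    and B_meas: "(\<lambda>(E, c). B E c) \<in> borel_measurable (restrict_space borel ({0..} \<times> {-1..1}))"
    and f_meas: "\<forall>m. f m \<in> borel_measurable lborel"
    and f_decay: "(\<integral>\<^sup>+m. (\<integral>\<^sup>+m1. (\<Sum>m'=1..m+m1-1. ennreal (A m m1 m') *
                   nn_integral (lborel \<Otimes>\<^sub>M lborel \<Otimes>\<^sub>M sphere_measure)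
                     (\<lambda>(v, v1, \<Omega>). ennreal (indicator precoll (v, v1, \<Omega>) * cross_B B m m1 v v1 \<Omega>
                                          * \<bar>f m v\<bar> * \<bar>f m1 v1\<bar>)))
                 \<partial>count_space {1..}) \<partial>count_space {1..}) < \<infinity>"
    and phi_meas: "\<forall>m. \<phi> m \<in> borel_measurable lborel"
    and phi_bdd: "\<forall>m v. \<bar>\<phi> m v\<bar> \<le> C"
  shows "((\<lambda>m. \<integral>v. BME_strong A B f m v * \<phi> m v \<partial>lborel) has_sum BME_weak_rhs A B f \<phi>) {1..}"
proof -
  interpret bme_setting A B f \<phi> C
    by (rule bme_setting.intro) (fact assms)+
  have split: "(\<integral>v. BME_strong A B f m v * \<phi> m v \<partial>lborel)
      = (\<integral>v. \<phi> m v * strong_gain m v \<partial>lborel) - (\<integral>v. \<phi> m v * strong_loss m v \<partial>lborel)" if "m \<in> {1..}" for m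
  proof -
    have "BME_strong A B f m v * \<phi> m v = \<phi> m v * strong_gain m v - \<phi> m v * strong_loss m v" for v
      by (simp add: BME_strong_eq algebra_simps)
    then show ?thesis
      using integrable_strong_gain[of m] integrable_strong_loss[of m] that by simp
  qed
  have "((\<lambda>m. (\<integral>v. \<phi> m v * strong_gain m v \<partial>lborel) - (\<integral>v. \<phi> m v * strong_loss m v \<partial>lborel))
      has_sum (\<Sum>\<^sub>\<infinity>i\<in>coll_indices. weak_gain i) - (\<Sum>\<^sub>\<infinity>i\<in>coll_indices. weak_loss i)) {1..}"
    by (rule has_sum_diff[OF has_sum_integral_strong_gain has_sum_integral_strong_loss])
  then show ?thesis
    unfolding weak_rhs_eq using split by (subst has_sum_cong) auto
qed

end
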